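(* Suppose Assumptions (A1)–(A3) hold and let $\{\boldsymbol x_k\},\{\boldsymbol v_k\}$ be generated by Algorithm 2 with parameters $\alpha>\beta>0$, $\eta>0$ and $\delta_{i,k}>0$. Define $\tilde\epsilon_1=(\alpha-\beta)\rho_2(L)-\frac12(2+9L_f^2)$, $\tilde\epsilon_2=\beta^2\rho(L)+(2\alpha^2+\beta^2)\rho^2(L)+\frac{15}2L_f^2$, $\epsilon_3=\beta-\frac12-\frac\alpha{2\beta^2}-\frac1{2\beta\rho_2(L)}$, $\epsilon_4=2\beta^2+\frac12$, $\tilde\epsilon_5=\frac18-\frac3{2\beta}(\frac1\beta+\frac1{\rho_2(L)}+\frac\alpha\beta)L_f^2$, $\tilde\epsilon_6=\frac3{\beta^2}(1+\frac1{\rho_2(L)}+\frac\alpha\beta)L_f^2+\frac{L_f(1+3L_f)}2$, $\epsilon_{12}=((\frac1{\beta^2}+\frac1{2\eta\beta})(\frac1{\rho_2(L)}+\frac\alpha\beta)+\frac1{2\eta\beta^2}+\frac1{\beta^2}+\frac12)\frac{3npL_f^2}4$, $\epsilon_{11}=(\frac{15\eta}4+5\eta^2)\frac{3npL_f^2}4+\epsilon_{12}$, and $$U_k=\frac12\|\boldsymbol x_k\|^2_{\boldsymbol K}+\frac12\Big\|\boldsymbol v_k+\frac1\beta\boldsymbol h^0_k\Big\|^2_{\boldsymbol Q+\frac\alpha\beta\boldsymbol K}+\boldsymbol x_k^\top\boldsymbol K\Big(\boldsymbol v_k+\frac1\beta\boldsymbol h^0_k\Big)+n(f(\bar x_k)-f^*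 ).$$ Then for all $k\in\mathbb N_0$, $$U_{k+1}\le U_k-\eta(\tilde\epsilon_1-\eta\tilde\epsilon_2)\|\boldsymbol x_k\|^2_{\boldsymbol K}-\eta(\epsilon_3-\eta\epsilon_4)\Big\|\boldsymbol v_k+\frac1\beta\boldsymbol h^0_k\Big\|^2_{\boldsymbol K}-\eta(\tilde\epsilon_5-\eta\tilde\epsilon_6)\|\bar{\boldsymbol h}_k\|^2-\frac\eta8\|\bar{\boldsymbol g}^0_k\|^2+\epsilon_{11}\delta_k^2+\epsilon_{12}\delta_{k+1}^2.$$
   Context: Setting: $n$ agents on weighted undirected graph $\mathcal G$ with Laplacian $L=(L_{ij})$; $\rho(L)$ largest and $\rho_2(L)$ smallest positive eigenvalue of $L$. $f=\frac1n\sum_if_i$, $f_i:\mathbb R^p\to\mathbb R$, $f^*=\min f$. Assumptions: (A1) $\mathcal G$ connected; (A2) $\arg\min f\ne\emptyset$, $f^*>-\infty$; (A3) each $\nabla f_i$ is $L_f$-Lipschitz. Gradient estimator: $\hat\nabla h(x,\delta)=\frac1\delta\sum_{l=1}^p(h(x+\delta e_l)-h(x))e_l$ with $e_l$ the standard basis. Algorithm 2: $x_{i,0}$ arbitrary, $\sum_jv_{j,0}=\mathbf 0_p$, $x_{i,k+1}=x_{i,k}-\eta(\alpha\sum_jL_{ij}x_{j,k}+\beta v_{i,k}+\hat\nabla f_i(x_{i,k},\delta_{i,k}))$, $v_{i,k+1}=v_{i,k}+\eta\beta\sum_jL_{ij}x_{j,k}$. Notation: $\boldsymbol x_k=\mathrm{col}(x_{i,k})$,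 $\boldsymbol v_k=\mathrm{col}(v_{i,k})$, $\bar x_k=\frac1n\sum_ix_{i,k}$, $\boldsymbol K=(I_n-\frac1n\mathbf 1\mathbf 1^\top)\otimes I_p$, $\boldsymbol H=\frac1n\mathbf 1\mathbf 1^\top\otimes I_p$, $\|z\|^2_M=z^\top Mz$, $\delta_k=\max_i\delta_{i,k}$, $\boldsymbol h_k=\mathrm{col}(\hat\nabla f_i(x_{i,k},\delta_{i,k}))$, $\bar{\boldsymbol h}_k=\boldsymbol H\boldsymbol h_k$, $\boldsymbol h^0_k=\mathrm{col}(\hat\nabla f_i(\bar x_k,\delta_k))$, $\bar{\boldsymbol g}^0_k=\mathbf 1_n\otimes\nabla f(\bar x_k)$. $\boldsymbol Q=R\Lambda_1^{-1}R^\top\otimes I_p$, where $[\frac1{\sqrt n}\mathbf 1_n\ R]$ is orthogonal, the columns of $R$ are orthonormal eigenvectors of $L$ for its nonzero eigenvalues $\lambda_2\le\dots\le\lambda_n$, and $\Lambda_1=\mathrm{diag}(\lambda_2,\dots,\lambda_n)$ (i.e. $R\Lambda_1^{-1}R^\top$ is the pseudoinverse of $L$). *)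

theory Defs
  imports "HOL-Analysis.Analysis"
begin

text \<open>Stacked vectors col(z_1,...,z_n) with z_i in R^p are elements of real^'p^'n.\<close>

text \<open>Action of the Kronecker product (M \<otimes> I_p) on a stacked vector.\<close>
definition kron_act :: "real^'n^'n \<Rightarrow> real^'p^'n \<Rightarrow> real^'p^'n" where
  "kron_act M z = (\<chi> i. \<Sum>j\<in>UNIV. (M$i$j) *\<^sub>R (z$j))"

definition wnorm2 :: "real^'n^'n \<Rightarrow> real^'p^'n \<Rightarrow> real" where
  "wnorm2 M z = inner z (kron_act M z)"

definition Kmat :: "real^'n^'n" where
  "Kmat = (\<chi> i j. (if i = j then 1 else 0) - 1 / real CARD('n))"

definition Hmat :: "real^'n^'n" where
  "Hmat = (\<chi> i j. 1 / real CARD('n))"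

definition laplacian :: "real^'n^'n \<Rightarrow> real^'n^'n" where
  "laplacian a = (\<chi> i j. if i = j then (\<Sum>k\<in>UNIV - {i}. a$i$k) else - a$i$j)"

definition weighted_undirected_graph :: "real^'n^'n \<Rightarrow> bool" where
  "weighted_undirected_graph a \<longleftrightarrow>
     (\<forall>i j. a$i$j = a$j$i) \<and> (\<forall>i j. 0 \<le> a$i$j) \<and> (\<forall>i. a$i$i = 0)"

definition graph_connected :: "real^'n^'n \<Rightarrow> bool" where
  "graph_connected a \<longleftrightarrow> (\<forall>i j. (i, j) \<in> {(k, l). 0 < a$k$l}\<^sup>*)"

definition eigenvalues :: "real^'n^'n \<Rightarrow> real set" where
  "eigenvalues M = {e. \<exists>v. v \<noteq> 0 \<and> M *v v = e *\<^sub>R v}"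

definition rho :: "real^'n^'n \<Rightarrow> real" where
  "rho M = Max (eigenvalues M)"

definition rho2 :: "real^'n^'n \<Rightarrow> real" where
  "rho2 M = Min {e \<in> eigenvalues M. 0 < e}"

text \<open>Moore--Penrose pseudoinverse (for symmetric L this equals R \<Lambda>_1^{-1} R^T).\<close>
definition pinv :: "real^'n^'n \<Rightarrow> real^'n^'n" where
  "pinv M = (THE Q. M ** Q ** M = M \<and> Q ** M ** Q = Q \<and>
                    transpose (M ** Q) = M ** Q \<and> transpose (Q ** M) = Q ** M)"

definition grad_est :: "(real^'p \<Rightarrow> real) \<Rightarrow> real^'p \<Rightarrow> real \<Rightarrow> real^'p" where
  "grad_est h x \<delta> = (1 / \<delta>) *\<^sub>R (\<Sum>l\<in>UNIV. (h (x + \<delta> *\<^sub>R axis l 1) - h x) *\<^sub>R axis l 1)"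

end

theory Submission
  imports Defs
begin

text \<open>
  The consensus part of U,
  \<open>\<Phi>(x, w) = 1/2 |x|\<^sup>2\<^sub>K + 1/2 |w|\<^sup>2\<^sub>Q\<^sub>+\<^sub>(\<^sub>\<alpha>\<^sub>/\<^sub>\<beta>\<^sub>)\<^sub>K + x\<^sup>T K w\<close>,
  is a quadratic form, so its one-step change is a polynomial in \<open>\<eta>\<close> whose cross terms are
  split by Young's inequality.  The Laplacian quadratic form is sandwiched between
  \<open>\<rho>\<^sub>2(L) |x|\<^sup>2\<^sub>K\<close> and \<open>\<rho>(L) |x|\<^sup>2\<^sub>K\<close>, and the pseudoinverse Q inverts L on the range
  of K.  The objective part \<open>n (f - f\<^sup>*)\<close>, taken at the network average, decreases by the
  descent lemma: the dual variable keeps zero mean, so the average moves by \<open>-\<eta>\<close> times the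
  average gradient estimate.  Each estimate is within \<open>L\<^sub>f \<delta> \<surd>p / 2\<close> of a true gradient, again by
  the descent lemma, and this produces the \<open>\<delta>\<^sup>2\<close> terms.
\<close>

lemma kron_act_eq_matrix_mult: "kron_act M z = M ** z"
  unfolding kron_act_def matrix_matrix_mult_def by (simp add: vec_eq_iff)

lemma matrix_add_rdistrib: "((A::'a::semiring_1^'m^'n) + B) ** C = A ** C + B ** C"
  by (simp add: matrix_matrix_mult_def vec_eq_iff distrib_right sum.distrib)

lemma matrix_diff_ldistrib: "(A::'a::ring_1^'m^'n) ** (B - C) = A ** B - A ** C"
  by (simp add: matrix_matrix_mult_def vec_eq_iff right_diff_distrib sum_subtractf)

lemma matrix_diff_rdistrib: "((A::'a::ring_1^'m^'n) - B) ** C = A ** C - B ** C"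
  by (simp add: matrix_matrix_mult_def vec_eq_iff left_diff_distrib sum_subtractf)

lemma matrix_mul_scaleR_right: "(A::real^'m^'n) ** (c *\<^sub>R B) = c *\<^sub>R (A ** B)"
  by (simp add: matrix_matrix_mult_def vec_eq_iff algebra_simps sum_distrib_left)

lemma matrix_mul_scaleR_left: "(c *\<^sub>R (A::real^'m^'n)) ** B = c *\<^sub>R (A ** B)"
  by (simp add: matrix_matrix_mult_def vec_eq_iff algebra_simps sum_distrib_left)

lemmas matrix_mul_linear_simps =
  matrix_add_ldistrib matrix_add_rdistrib matrix_diff_ldistrib matrix_diff_rdistrib
  matrix_mul_scaleR_left matrix_mul_scaleR_right

lemma transpose_add: "transpose ((A::'a::semiring_1^'n^'m) + B) = transpose A + transpose B"
  by (simp add: transpose_def vec_eq_iff)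

lemma transpose_diff: "transpose ((A::'a::ring_1^'n^'m) - B) = transpose A - transpose B"
  by (simp add: transpose_def vec_eq_iff)

lemma Kmat_eq_mat1_minus_Hmat: "(Kmat::real^'n^'n) = mat 1 - Hmat"
  by (simp add: Kmat_def Hmat_def mat_def vec_eq_iff)

lemma Hmat_idem: "(Hmat::real^'n^'n) ** Hmat = Hmat"
  by (simp add: Hmat_def matrix_matrix_mult_def vec_eq_iff)

lemma transpose_Hmat: "transpose (Hmat::real^'n^'n) = Hmat"
  by (simp add: Hmat_def transpose_def vec_eq_iff)

lemma transpose_Kmat: "transpose (Kmat::real^'n^'n) = Kmat"
  by (simp add: Kmat_def transpose_def vec_eq_iff)

lemma Kmat_idem: "(Kmat::real^'n^'n) ** Kmat = Kmat"
  by (simp add: Kmat_eq_mat1_minus_Hmat matrix_mul_linear_simps Hmat_idem)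

lemma Hmat_mult_Kmat: "(Hmat::real^'n^'n) ** Kmat = 0"
  by (simp add: Kmat_eq_mat1_minus_Hmat matrix_diff_ldistrib Hmat_idem)

lemma Kmat_mult_Hmat: "(Kmat::real^'n^'n) ** Hmat = 0"
  by (simp add: Kmat_eq_mat1_minus_Hmat matrix_diff_rdistrib Hmat_idem)

lemma inner_one_left: "inner 1 (u::real^'n) = (\<Sum>i\<in>UNIV. u$i)"
  by (simp add: inner_vec_def)

lemma Hmat_mult_vector: "(Hmat::real^'n^'n) *v u = (inner 1 u / real CARD('n)) *\<^sub>R 1"
  by (simp add: Hmat_def matrix_vector_mult_def vec_eq_iff inner_one_left sum_divide_distrib)

lemma Kmat_mult_vector: "(Kmat::real^'n^'n) *v u = u - (inner 1 u / real CARD('n)) *\<^sub>R 1"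
  by (simp add: Kmat_eq_mat1_minus_Hmat matrix_vector_mult_diff_rdistrib Hmat_mult_vector)

lemma inner_one_Kmat: "inner 1 ((Kmat::real^'n^'n) *v u) = 0"
  by (simp add: Kmat_mult_vector inner_diff_right inner_one_left)

subsection \<open>The graph Laplacian\<close>

context
  fixes a :: "real^'n^'n"
  assumes graph: "weighted_undirected_graph a"
begin

lemma laplacian_nth:
  "laplacian a $ i $ j = (if i = j then (\<Sum>k\<in>UNIV. a$i$k) else 0) - a$i$j"
proof -
  have "(\<Sum>k\<in>UNIV. a$i$k) = a$i$i + (\<Sum>k\<in>UNIV - {i}. a$i$k)"
    by (simp add: sum.remove)
  then show ?thesis using graph
    by (auto simp: laplacian_def weighted_undirected_graph_def)
qed

lemma transpose_laplacian: "transpose (laplacian a) = laplacian a"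
proof -
  have "a$i$j = a$j$i" for i j
    using graph by (simp add: weighted_undirected_graph_def)
  then show ?thesis by (auto simp: vec_eq_iff transpose_def laplacian_nth)
qed

lemma laplacian_row_sum: "(\<Sum>j\<in>UNIV. laplacian a $ i $ j) = 0"
proof -
  have "(\<Sum>j\<in>UNIV. laplacian a $ i $ j)
      = (\<Sum>j\<in>UNIV. if i = j then (\<Sum>k\<in>UNIV. a$i$k) else 0) - (\<Sum>j\<in>UNIV. a$i$j)"
    by (simp add: laplacian_nth sum_subtractf)
  then show ?thesis by simp
qed

lemma laplacian_column_sum: "(\<Sum>i\<in>UNIV. laplacian a $ i $ j) = 0"
proof -
  have "laplacian a $ i $ j = laplacian a $ j $ i" for i
    using transpose_laplacian by (metis transpose_def vec_lambda_beta)
  then show ?thesis using laplacian_row_sum[of j] by simp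
qed

lemma laplacian_mult_Hmat: "laplacian a ** Hmat = 0"
  using laplacian_row_sum
  by (simp add: Hmat_def matrix_matrix_mult_def vec_eq_iff sum_divide_distrib[symmetric])

lemma Hmat_mult_laplacian: "Hmat ** laplacian a = 0"
  using laplacian_column_sum
  by (simp add: Hmat_def matrix_matrix_mult_def vec_eq_iff sum_divide_distrib[symmetric])

lemma laplacian_mult_Kmat: "laplacian a ** Kmat = laplacian a"
  by (simp add: Kmat_eq_mat1_minus_Hmat matrix_diff_ldistrib laplacian_mult_Hmat)

lemma Kmat_mult_laplacian: "Kmat ** laplacian a = laplacian a"
  by (simp add: Kmat_eq_mat1_minus_Hmat matrix_diff_rdistrib Hmat_mult_laplacian)

lemma laplacian_quadratic_form:
  "inner u (laplacian a *v u) = (1/2) * (\<Sum>i\<in>UNIV. \<Sum>j\<in>UNIV. a$i$j * (u$i - u$j)^2)"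
proof -
  have row: "(\<Sum>j\<in>UNIV. laplacian a $ i $ j * u$j) = (\<Sum>k\<in>UNIV. a$i$k) * u$i - (\<Sum>j\<in>UNIV. a$i$j * u$j)"
    for i
  proof -
    have "(\<Sum>j\<in>UNIV. laplacian a $ i $ j * u$j)
        = (\<Sum>j\<in>UNIV. (if i = j then (\<Sum>k\<in>UNIV. a$i$k) * u$j else 0) - a$i$j * u$j)"
      by (rule sum.cong[OF refl]) (simp add: laplacian_nth algebra_simps)
    then show ?thesis by (simp add: sum_subtractf)
  qed
  have "inner u (laplacian a *v u) = (\<Sum>i\<in>UNIV. u$i * (\<Sum>j\<in>UNIV. laplacian a $ i $ j * u$j))"
    by (simp add: inner_vec_def matrix_vector_mult_def)
  also have "\<dots> = (\<Sum>i\<in>UNIV. u$i * ((\<Sum>k\<in>UNIV. a$i$k) * u$i - (\<Sum>j\<in>UNIV. a$i$j * u$j)))"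
    by (simp only: row)
  also have "\<dots> = (\<Sum>i\<in>UNIV. \<Sum>j\<in>UNIV. a$i$j * (u$i)^2) - (\<Sum>i\<in>UNIV. \<Sum>j\<in>UNIV. a$i$j * u$i * u$j)"
    by (simp add: right_diff_distrib sum_subtractf sum_distrib_left sum_distrib_right
        power2_eq_square algebra_simps)
  finally have "inner u (laplacian a *v u)
      = (\<Sum>i\<in>UNIV. \<Sum>j\<in>UNIV. a$i$j * (u$i)^2) - (\<Sum>i\<in>UNIV. \<Sum>j\<in>UNIV. a$i$j * u$i * u$j)" .
  moreover have "(\<Sum>i\<in>UNIV. \<Sum>j\<in>UNIV. a$i$j * (u$j)^2) = (\<Sum>i\<in>UNIV. \<Sum>j\<in>UNIV. a$i$j * (u$i)^2)"
    using graph by (subst sum.swap) (simp add: weighted_undirected_graph_def)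
  ultimately show ?thesis
    by (simp add: power2_diff algebra_simps sum.distrib sum_subtractf sum_distrib_left)
qed

lemma laplacian_nonneg: "0 \<le> inner u (laplacian a *v u)"
  using graph unfolding laplacian_quadratic_form weighted_undirected_graph_def
  by (intro mult_nonneg_nonneg sum_nonneg) auto

end

subsection \<open>Extremal quadratic forms of symmetric matrices\<close>

lemma symmetric_matrix_inner_commute:
  fixes A :: "real^'n^'n"
  assumes "transpose A = A"
  shows "inner u (A *v w) = inner w (A *v u)"
proof -
  have "inner u (A *v w) = inner (u v* A) w" by (simp add: dot_lmul_matrix)
  also have "u v* A = transpose A *v u"
    by (metis transpose_transpose vector_transpose_matrix)
  finally show ?thesis using assms by (simp add: inner_commute)
qed

lemma quadratic_form_sgn:
  fixes A :: "real^'n^'n"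
  shows "inner u (A *v u) = (norm u)^2 * inner (sgn u) (A *v sgn u)"
  by (cases "u = 0")
    (simp_all add: sgn_div_norm matrix_vector_mult_scaleR power2_eq_square field_simps)

lemma linear_coefficient_eq_0:
  fixes b c :: real
  assumes "\<And>t. 0 \<le> 2*t*b + t^2*c"
  shows "b = 0"
proof (rule ccontr)
  assume "b \<noteq> 0"
  define t where "t = - b / (\<bar>c\<bar> + 1)"
  have "0 \<le> 2*t*b + t^2*c" by (rule assms)
  also have "\<dots> \<le> 2*t*b + t^2*\<bar>c\<bar>" by (simp add: mult_left_mono)
  also have "\<dots> = b^2 * (- \<bar>c\<bar> - 2) / (\<bar>c\<bar>+1)^2"
    unfolding t_def by (simp add: power2_eq_square divide_simps) (simp add: algebra_simps)
  also have "\<dots> < 0"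
    using \<open>b \<noteq> 0\<close> by (intro divide_neg_pos mult_pos_neg) auto
  finally show False by simp
qed

context
  fixes A :: "real^'n^'n" and c z0 :: "real^'n"
  assumes sym: "transpose A = A"
    and z0: "norm z0 = 1" "inner c z0 = 0"
    and minimal: "\<forall>u. norm u = 1 \<longrightarrow> inner c u = 0 \<longrightarrow> inner z0 (A *v z0) \<le> inner u (A *v u)"
begin

lemma constrained_minimizer_orthogonal:
  assumes y: "inner c y = 0" "inner y z0 = 0"
  shows "inner y (A *v z0) = 0"
proof (rule linear_coefficient_eq_0)
  fix t :: real
  \<comment> \<open>\<open>z0 + t y\<close> still satisfies the constraint, so its Rayleigh quotient is at least
    that of \<open>z0\<close>.\<close>
  define m where "m = inner z0 (A *v z0)"
  define w where "w = z0 + t *\<^sub>R y"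
  have "inner z0 z0 = 1" using z0 by (simp flip: power2_norm_eq_inner)
  then have nw: "(norm w)^2 = 1 + t^2 * (norm y)^2"
    using y unfolding w_def power2_norm_eq_inner
    by (simp add: inner_add_left inner_add_right inner_commute power2_eq_square algebra_simps)
  then have "w \<noteq> 0"
    by (metis add_pos_nonneg mult_nonneg_nonneg zero_le_power2 zero_less_one norm_zero
        power_zero_numeral order_less_irrefl)
  moreover have "inner c (sgn w) = 0"
    unfolding w_def sgn_div_norm using z0 y by (simp add: inner_add_right)
  ultimately have "m \<le> inner (sgn w) (A *v sgn w)"
    unfolding m_def using minimal by (simp add: norm_sgn)
  then have "m * (norm w)^2 \<le> inner w (A *v w)"
    using quadratic_form_sgn[of w A] by (metis mult.commute mult_right_mono zero_le_power2)
  moreover have "inner w (A *v w) = m + 2*t*(inner y (A *v z0)) + t^2 * inner y (A *v y)"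
    unfolding w_def m_def using symmetric_matrix_inner_commute[OF sym, of y z0]
    by (simp add: matrix_vector_mult_scaleR matrix_vector_right_distrib inner_add_left
        inner_add_right power2_eq_square algebra_simps)
  ultimately show "0 \<le> 2*t*(inner y (A *v z0)) + t^2*(inner y (A *v y) - m * (norm y)^2)"
    using nw by (simp add: algebra_simps)
qed

lemma constrained_minimizer_eigenvector:
  assumes Ac: "A *v c = 0"
  shows "A *v z0 = inner z0 (A *v z0) *\<^sub>R z0"
proof -
  define y where "y = A *v z0 - inner z0 (A *v z0) *\<^sub>R z0"
  have zz: "inner z0 z0 = 1" using z0 by (simp flip: power2_norm_eq_inner)
  have cy: "inner c y = 0"
    unfolding y_def using z0 symmetric_matrix_inner_commute[OF sym, of c z0] Ac
    by (simp add: inner_diff_right)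
  have "inner (A *v z0) z0 = inner z0 (A *v z0)" by (simp add: inner_commute)
  then have yz: "inner y z0 = 0"
    unfolding y_def using zz by (simp add: inner_diff_left)
  have "inner y y = inner y (A *v z0) - inner z0 (A *v z0) * inner y z0"
    unfolding y_def by (simp add: inner_diff_right)
  then have "y = 0"
    using constrained_minimizer_orthogonal[OF cy yz] yz by simp
  then show ?thesis unfolding y_def by simp
qed

end

lemma finite_eigenvalues_symmetric:
  fixes A :: "real^'n^'n"
  assumes sym: "transpose A = A"
  shows "finite (eigenvalues A)"
proof -
  define ev where "ev e = (SOME v. v \<noteq> 0 \<and> A *v v = e *\<^sub>R v)" for e
  have evp: "ev e \<noteq> 0 \<and> A *v ev e = e *\<^sub>R ev e" if "e \<in> eigenvalues A" for e
    unfolding ev_def using that someI_ex[of "\<lambda>v. v \<noteq> 0 \<and> A *v v = e *\<^sub>R v"]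
    by (auto simp: eigenvalues_def)
  have orth: "inner (ev e1) (ev e2) = 0"
    if "e1 \<in> eigenvalues A" "e2 \<in> eigenvalues A" "e1 \<noteq> e2" for e1 e2
  proof -
    have "inner (ev e1) (A *v ev e2) = inner (ev e2) (A *v ev e1)"
      by (rule symmetric_matrix_inner_commute[OF sym])
    then have "e2 * inner (ev e1) (ev e2) = e1 * inner (ev e1) (ev e2)"
      using evp[OF that(1)] evp[OF that(2)] by (simp add: inner_commute)
    then show ?thesis using that(3) by simp
  qed
  have "inj_on ev (eigenvalues A)"
    using orth evp by (metis inj_onI inner_eq_zero_iff)
  moreover have "independent (ev ` eigenvalues A)"
    using orth evp
    by (intro pairwise_orthogonal_independent) (auto simp: pairwise_def orthogonal_def)
  ultimately show ?thesis
    using finiteI_independent finite_imageD by blast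
qed

lemma norm_sq_le_quadratic_form:
  fixes A :: "real^'n^'n"
  assumes sym: "transpose A = A" and psd: "\<And>u. 0 \<le> inner u (A *v u)"
    and bound: "\<And>u. inner u (A *v u) \<le> M * (norm u)^2"
  shows "(norm (A *v u))^2 \<le> M * inner u (A *v u)"
proof -
  define w where "w = A *v u"
  have nw: "(norm w)^2 = inner u (A *v w)"
    unfolding w_def power2_norm_eq_inner using symmetric_matrix_inner_commute[OF sym, of u w]
    by (simp add: w_def)
  have expand: "0 \<le> t^2 * inner u (A *v u) - 2 * t * (norm w)^2 + inner w (A *v w)" for t
  proof -
    have "0 \<le> inner (t *\<^sub>R u - w) (A *v (t *\<^sub>R u - w))" by (rule psd)
    also have "\<dots> = t^2 * inner u (A *v u) - t * inner u (A *v w) - t * inner w (A *v u)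
        + inner w (A *v w)"
      by (simp add: matrix_vector_mult_diff_distrib matrix_vector_mult_scaleR inner_diff_left
          inner_diff_right power2_eq_square algebra_simps)
    finally show ?thesis
      using nw symmetric_matrix_inner_commute[OF sym, of w u] by (simp add: algebra_simps)
  qed
  have "M \<ge> 0" using bound[of "axis undefined 1"] psd[of "axis undefined 1"] by simp
  show ?thesis
  proof (cases "M = 0")
    case True
    have "0 \<le> inner u (A *v u) - 2 * (norm w)^2 + inner w (A *v w)"
      using expand[of 1] by simp
    moreover have "M * (norm u)^2 = 0" "M * (norm w)^2 = 0" using True by simp_all
    ultimately have "(norm w)^2 \<le> 0"
      using bound[of u] bound[of w] by linarith
    then show ?thesis using True by (simp add: w_def)
  next
    case False
    then have "M * (norm w)^2 \<le> M * (M * inner u (A *v u))"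
      using expand[of M] bound[of w] by (simp add: power2_eq_square algebra_simps)
    then show ?thesis using False \<open>M \<ge> 0\<close> by (simp add: w_def)
  qed
qed

lemma moore_penrose_inverse_unique:
  fixes A X Y :: "real^'n^'n"
  assumes X1: "A ** X ** A = A" and X2: "X ** A ** X = X"
    and X3: "transpose (A ** X) = A ** X" and X4: "transpose (X ** A) = X ** A"
    and Y1: "A ** Y ** A = A" and Y2: "Y ** A ** Y = Y"
    and Y3: "transpose (A ** Y) = A ** Y" and Y4: "transpose (Y ** A) = Y ** A"
  shows "X = Y"
proof -
  let ?T = transpose
  have "X = X ** (?T X ** ?T A)" using X2 X3 by (metis matrix_mul_assoc matrix_transpose_mul)
  also have "\<dots> = X ** ((?T X ** ?T A) ** (?T Y ** ?T A))"
    using Y1 by (metis matrix_transpose_mul matrix_mul_assoc)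
  also have "\<dots> = (X ** A ** X) ** A ** Y"
    using X3 Y3 by (metis matrix_transpose_mul matrix_mul_assoc)
  finally have XY: "X = X ** A ** Y" using X2 by simp
  have "Y = (?T A ** ?T Y) ** Y" using Y2 Y4 by (metis matrix_mul_assoc matrix_transpose_mul)
  also have "\<dots> = ((?T A ** ?T X) ** (?T A ** ?T Y)) ** Y"
    using X1 by (metis matrix_transpose_mul matrix_mul_assoc)
  also have "\<dots> = X ** A ** (Y ** A ** Y)"
    using X4 Y4 by (metis matrix_transpose_mul matrix_mul_assoc)
  finally show ?thesis using XY Y2 by simp
qed

subsection \<open>Spectral bounds for a connected graph\<close>

locale connected_graph =
  fixes a :: "real^'n^'n"
  assumes graph: "weighted_undirected_graph a"
    and connected: "graph_connected a"
    and card_ge_2: "CARD('n) \<ge> 2"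
begin

abbreviation L :: "real^'n^'n" where "L \<equiv> laplacian a"

lemma laplacian_mult_one: "L *v 1 = 0"
  using laplacian_row_sum[OF graph] by (simp add: matrix_vector_mult_def vec_eq_iff)

lemma inner_one_laplacian: "inner 1 (L *v u) = 0"
  using symmetric_matrix_inner_commute[OF transpose_laplacian[OF graph], of 1 u]
  by (simp add: laplacian_mult_one)

lemma laplacian_kernel:
  assumes "inner u (L *v u) = 0" and "inner 1 u = 0"
  shows "u = 0"
proof -
  have a_nonneg: "0 \<le> a$i$j" for i j
    using graph by (simp add: weighted_undirected_graph_def)
  have "(\<Sum>i\<in>UNIV. \<Sum>j\<in>UNIV. a$i$j * (u$i - u$j)^2) = 0"
    using assms(1) unfolding laplacian_quadratic_form[OF graph] by simp
  then have "a$i$j * (u$i - u$j)^2 = 0" for i j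
    using a_nonneg by (simp add: sum_nonneg_eq_0_iff sum_nonneg)
  then have edge: "0 < a$i$j \<Longrightarrow> u$i = u$j" for i j
    by (metis mult_eq_0_iff order_less_irrefl power_eq_0_iff right_minus_eq)
  have path: "u$i = u$j" if "(i, j) \<in> {(k, l). 0 < a$k$l}\<^sup>*" for i j
    using that by (induction rule: rtrancl_induct) (auto dest: edge)
  then have const: "u$j = u$i" for i j
    using connected unfolding graph_connected_def by metis
  have "inner 1 u = (\<Sum>j\<in>(UNIV::'n set). u$i)" for i
    unfolding inner_one_left by (rule sum.cong) (auto intro: const)
  then have "inner 1 u = real CARD('n) * u$i" for i
    by simp
  then show ?thesis
    using assms(2) const by (simp add: vec_eq_iff)
qed

lemma laplacian_quadratic_form_Kmat: "inner (Kmat *v u) (L *v (Kmat *v u)) = inner u (L *v u)"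
proof -
  have "L *v (Kmat *v u) = L *v u"
    by (simp add: matrix_vector_mul_assoc laplacian_mult_Kmat[OF graph])
  then show ?thesis
    by (simp add: Kmat_mult_vector inner_diff_left inner_one_laplacian)
qed

lemma constrained_laplacian_minimizer:
  obtains z where "norm z = 1" "inner 1 z = 0"
    "\<forall>u. norm u = 1 \<longrightarrow> inner 1 u = 0 \<longrightarrow> inner z (L *v z) \<le> inner u (L *v u)"
proof -
  let ?S = "sphere (0::real^'n) 1 \<inter> {u. inner 1 u = 0}"
  have "\<not> CARD('n) \<le> Suc 0" using card_ge_2 by simp
  then obtain i j :: 'n where "i \<noteq> j" by (auto simp: card_le_Suc0_iff_eq)
  then have "(axis i 1 - axis j 1 :: real^'n) $ i = 1"
    by (simp add: axis_def)
  then have "axis i 1 - axis j 1 \<noteq> (0::real^'n)"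
    by (metis zero_index zero_neq_one)
  moreover have "inner 1 (axis i 1 - axis j 1 :: real^'n) = 0"
    by (simp add: inner_diff_right inner_axis)
  ultimately have "sgn (axis i 1 - axis j 1 :: real^'n) \<in> ?S"
    by (simp add: sgn_div_norm norm_sgn)
  then have "?S \<noteq> {}" by blast
  moreover have "compact ?S"
    by (intro compact_Int_closed compact_sphere closed_hyperplane)
  moreover have "continuous_on ?S (\<lambda>u. inner u (L *v u))"
    by (intro continuous_intros linear_continuous_on matrix_vector_mul_bounded_linear)
  ultimately obtain z where "z \<in> ?S" "\<forall>u\<in>?S. inner z (L *v z) \<le> inner u (L *v u)"
    using continuous_attains_inf[of ?S "\<lambda>u. inner u (L *v u)"] by blast
  then show ?thesis using that by auto
qed

lemma laplacian_maximizer: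
  obtains z :: "real^'n" where "norm z = 1"
    "\<forall>u. norm u = 1 \<longrightarrow> inner u (L *v u) \<le> inner z (L *v z)"
proof -
  have "continuous_on (sphere (0::real^'n) 1) (\<lambda>u. inner u (L *v u))"
    by (intro continuous_intros linear_continuous_on matrix_vector_mul_bounded_linear)
  from continuous_attains_sup[OF compact_sphere _ this] show ?thesis using that by auto
qed

text \<open>The Rayleigh quotient on the complement of the consensus direction attains a
  positive eigenvalue, namely the algebraic connectivity.\<close>

lemma exists_positive_eigenvalue_below_laplacian:
  "\<exists>m \<in> eigenvalues L. 0 < m \<and> (\<forall>u. m * (norm (Kmat *v u))^2 \<le> inner u (L *v u))"
proof -
  obtain z where z: "norm z = 1" "inner 1 z = 0"
    and min: "\<forall>u. norm u = 1 \<longrightarrow> inner 1 u = 0 \<longrightarrow> inner z (L *v z) \<le> inner u (L *v u)"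
    by (rule constrained_laplacian_minimizer)
  define m where "m = inner z (L *v z)"
  have "L *v z = m *\<^sub>R z" unfolding m_def
    by (rule constrained_minimizer_eigenvector[OF transpose_laplacian[OF graph] z min
          laplacian_mult_one])
  moreover have "z \<noteq> 0" using z by auto
  ultimately have "m \<in> eigenvalues L"
    unfolding eigenvalues_def by blast
  moreover have "m \<noteq> 0"
    using laplacian_kernel[of z] z \<open>z \<noteq> 0\<close> unfolding m_def by auto
  then have "0 < m"
    using laplacian_nonneg[OF graph, of z] unfolding m_def by simp
  moreover have "m * (norm (Kmat *v u))^2 \<le> inner u (L *v u)" for u
  proof (cases "Kmat *v u = 0")
    case False
    moreover have "inner 1 (sgn (Kmat *v u)) = 0"
      by (simp add: sgn_div_norm inner_one_Kmat)
    ultimately have "m \<le> inner (sgn (Kmat *v u)) (L *v sgn (Kmat *v u))"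
      using min unfolding m_def by (simp add: norm_sgn)
    then show ?thesis
      using quadratic_form_sgn[of "Kmat *v u" L] laplacian_quadratic_form_Kmat[of u]
      by (metis mult.commute mult_right_mono zero_le_power2)
  qed (use laplacian_nonneg[OF graph, of u] in simp)
  ultimately show ?thesis by blast
qed

lemma exists_eigenvalue_above_laplacian:
  "\<exists>M \<in> eigenvalues L. 0 \<le> M \<and> (\<forall>u. inner u (L *v u) \<le> M * (norm u)^2)"
proof -
  obtain z where z: "norm z = 1"
    and "\<forall>u. norm u = 1 \<longrightarrow> inner u (L *v u) \<le> inner z (L *v z)"
    by (rule laplacian_maximizer)
  then have max: "\<And>u. norm u = 1 \<Longrightarrow> inner u (L *v u) \<le> inner z (L *v z)"
    by blast
  define M where "M = inner z (L *v z)"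
  \<comment> \<open>A maximiser for \<open>L\<close> is an unconstrained minimiser for \<open>-L\<close>.\<close>
  have neg: "(- L) *v u = - (L *v u)" for u
    by (simp add: matrix_vector_mult_def vec_eq_iff sum_negf)
  have "transpose (- L) = - L"
    using transpose_scalar[of "-1" L] transpose_laplacian[OF graph] by simp
  then have "(- L) *v z = inner z ((- L) *v z) *\<^sub>R z"
  proof (rule constrained_minimizer_eigenvector[where c = 0])
    show "\<forall>u. norm u = 1 \<longrightarrow> inner 0 u = 0 \<longrightarrow> inner z ((- L) *v z) \<le> inner u ((- L) *v u)"
      using max by (simp add: neg)
  qed (simp_all add: z neg)
  then have "L *v z = M *\<^sub>R z"
    unfolding M_def neg by (simp add: vec_eq_iff)
  moreover have "z \<noteq> 0" using z by auto
  ultimately have "M \<in> eigenvalues L"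
    unfolding eigenvalues_def by blast
  moreover have "inner u (L *v u) \<le> M * (norm u)^2" for u
  proof (cases "u = 0")
    case False
    then have "inner (sgn u) (L *v sgn u) \<le> M" unfolding M_def by (intro max) (simp add: norm_sgn)
    then show ?thesis
      using quadratic_form_sgn[of u L] by (metis mult.commute mult_right_mono zero_le_power2)
  qed simp
  ultimately show ?thesis
    using laplacian_nonneg[OF graph, of z] unfolding M_def by blast
qed

lemma rho2_pos: "0 < rho2 L"
  and rho2_le_laplacian_quadratic_form: "rho2 L * (norm (Kmat *v u))^2 \<le> inner u (L *v u)"
proof -
  obtain m where m: "m \<in> eigenvalues L" "0 < m"
    and bound: "\<And>u. m * (norm (Kmat *v u))^2 \<le> inner u (L *v u)"
    using exists_positive_eigenvalue_below_laplacian by blast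
  have fin: "finite {e \<in> eigenvalues L. 0 < e}"
    using finite_eigenvalues_symmetric[OF transpose_laplacian[OF graph]] by simp
  have "rho2 L \<in> {e \<in> eigenvalues L. 0 < e}"
    unfolding rho2_def using fin m by (intro Min_in) auto
  then show "0 < rho2 L" by simp
  have "rho2 L \<le> m" unfolding rho2_def using fin m by simp
  then show "rho2 L * (norm (Kmat *v u))^2 \<le> inner u (L *v u)"
    using bound[of u] by (meson mult_right_mono order_trans zero_le_power2)
qed

lemma laplacian_quadratic_form_le_rho: "inner u (L *v u) \<le> rho L * (norm (Kmat *v u))^2"
  and norm_laplacian_le_rho: "(norm (L *v u))^2 \<le> (rho L)^2 * (norm (Kmat *v u))^2"
proof -
  obtain M where M: "M \<in> eigenvalues L" "0 \<le> M"
    and bound: "\<And>u. inner u (L *v u) \<le> M * (norm u)^2"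
    using exists_eigenvalue_above_laplacian by blast
  have "M \<le> rho L"
    unfolding rho_def using finite_eigenvalues_symmetric[OF transpose_laplacian[OF graph]] M
    by simp
  have bound_K: "inner u (L *v u) \<le> M * (norm (Kmat *v u))^2" for u
    using bound[of "Kmat *v u"] by (simp add: laplacian_quadratic_form_Kmat)
  show "inner u (L *v u) \<le> rho L * (norm (Kmat *v u))^2"
    using bound_K[of u] \<open>M \<le> rho L\<close> by (meson mult_right_mono order_trans zero_le_power2)
  have "(norm (L *v u))^2 \<le> M * inner u (L *v u)"
    by (rule norm_sq_le_quadratic_form[OF transpose_laplacian[OF graph]
          laplacian_nonneg[OF graph] bound])
  also have "\<dots> \<le> M * (M * (norm (Kmat *v u))^2)"
    using bound_K M by (simp add: mult_left_mono)
  also have "\<dots> = (M * M) * (norm (Kmat *v u))^2" by simp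
  also have "\<dots> \<le> (rho L)^2 * (norm (Kmat *v u))^2"
    using \<open>M \<le> rho L\<close> M by (intro mult_right_mono) (simp_all add: power2_eq_square mult_mono)
  finally show "(norm (L *v u))^2 \<le> (rho L)^2 * (norm (Kmat *v u))^2" .
qed

end

subsection \<open>The pseudoinverse of the Laplacian\<close>

context connected_graph
begin

lemma laplacian_plus_Hmat_inj: "inj ((*v) (L + Hmat))"
proof (rule injI)
  fix x y :: "real^'n"
  assume eq: "(L + Hmat) *v x = (L + Hmat) *v y"
  define u where "u = x - y"
  have Mu: "(L + Hmat) *v u = 0"
    using eq unfolding u_def by (simp add: matrix_vector_mult_diff_distrib)
  have "inner 1 (1::real^'n) = real CARD('n)" by (simp add: inner_one_left)
  then have "inner 1 ((L + Hmat) *v u) = inner 1 u"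
    by (simp add: matrix_vector_mult_add_rdistrib inner_add_right inner_one_laplacian
        Hmat_mult_vector)
  then have "inner 1 u = 0" using Mu by simp
  moreover from this have "L *v u = 0"
    using Mu by (simp add: matrix_vector_mult_add_rdistrib Hmat_mult_vector)
  ultimately show "x = y"
    using laplacian_kernel[of u] unfolding u_def by simp
qed

text \<open>The pseudoinverse is \<open>(L + H)\<^sup>-\<^sup>1 - H\<close>.\<close>

lemma laplacian_pseudoinverse:
  obtains Q where "L ** Q = Kmat" "Q ** L = Kmat" "Kmat ** Q = Q" "Q ** Kmat = Q"
    "transpose Q = Q"
proof -
  obtain B where B: "B ** (L + Hmat) = mat 1"
    using laplacian_plus_Hmat_inj matrix_left_invertible_injective by blast
  then have B': "(L + Hmat) ** B = mat 1" using matrix_left_right_inverse by blast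
  have "Hmat ** (L + Hmat) = Hmat" "(L + Hmat) ** Hmat = Hmat"
    "(L + Hmat) ** Kmat = L" "Kmat ** (L + Hmat) = L"
    by (simp_all add: matrix_add_ldistrib matrix_add_rdistrib Hmat_mult_laplacian[OF graph]
        laplacian_mult_Hmat[OF graph] laplacian_mult_Kmat[OF graph] Kmat_mult_laplacian[OF graph]
        Hmat_idem Hmat_mult_Kmat Kmat_mult_Hmat)
  then have BH: "B ** Hmat = Hmat" "Hmat ** B = Hmat" and BL: "B ** L = Kmat" "L ** B = Kmat"
    using B B' by (metis matrix_mul_assoc matrix_mul_lid matrix_mul_rid)+
  have "transpose B = (B ** (L + Hmat)) ** transpose B" by (simp add: B)
  also have "\<dots> = B ** transpose (B ** transpose (L + Hmat))"
    by (simp add: matrix_mul_assoc matrix_transpose_mul)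
  also have "\<dots> = B"
    using B by (simp add: transpose_add transpose_laplacian[OF graph] transpose_Hmat)
  finally have "transpose B = B" .
  show ?thesis
  proof (rule that[of "B - Hmat"])
    show "L ** (B - Hmat) = Kmat" "(B - Hmat) ** L = Kmat"
      by (simp_all add: matrix_diff_ldistrib matrix_diff_rdistrib BL
          laplacian_mult_Hmat[OF graph] Hmat_mult_laplacian[OF graph])
    show "Kmat ** (B - Hmat) = B - Hmat" "(B - Hmat) ** Kmat = B - Hmat"
      by (simp_all add: Kmat_eq_mat1_minus_Hmat matrix_diff_ldistrib matrix_diff_rdistrib BH
          Hmat_idem)
    show "transpose (B - Hmat) = B - Hmat"
      by (simp add: transpose_diff \<open>transpose B = B\<close> transpose_Hmat)
  qed
qed

lemma laplacian_mult_pinv: "L ** pinv L = Kmat"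
  and pinv_mult_laplacian: "pinv L ** L = Kmat"
  and Kmat_mult_pinv: "Kmat ** pinv L = pinv L"
  and transpose_pinv: "transpose (pinv L) = pinv L"
proof -
  obtain Q where Q: "L ** Q = Kmat" "Q ** L = Kmat" "Kmat ** Q = Q" "Q ** Kmat = Q"
    "transpose Q = Q"
    by (rule laplacian_pseudoinverse)
  have mp: "L ** Q ** L = L \<and> Q ** L ** Q = Q \<and> transpose (L ** Q) = L ** Q
      \<and> transpose (Q ** L) = Q ** L"
    using Q by (simp add: transpose_Kmat Kmat_mult_laplacian[OF graph])
  have "pinv L = Q"
    unfolding pinv_def
  proof (rule the_equality)
    fix Y
    assume "L ** Y ** L = L \<and> Y ** L ** Y = Y \<and> transpose (L ** Y) = L ** Y
      \<and> transpose (Y ** L) = Y ** L"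
    then show "Y = Q" using mp moore_penrose_inverse_unique by blast
  qed (rule mp)
  then show "L ** pinv L = Kmat" "pinv L ** L = Kmat" "Kmat ** pinv L = pinv L"
    "transpose (pinv L) = pinv L"
    using Q by simp_all
qed

lemma pinv_quadratic_form_nonneg: "0 \<le> inner u (pinv L *v u)"
  and rho2_mult_pinv_quadratic_form_le: "rho2 L * inner u (pinv L *v u) \<le> (norm (Kmat *v u))^2"
proof -
  define y where "y = pinv L *v u"
  have Ly: "L *v y = Kmat *v u"
    unfolding y_def by (simp add: matrix_vector_mul_assoc laplacian_mult_pinv)
  have Ky: "Kmat *v y = y"
    unfolding y_def by (simp add: matrix_vector_mul_assoc Kmat_mult_pinv)
  have "inner y (Kmat *v u) = inner u (Kmat *v y)"
    by (rule symmetric_matrix_inner_commute[OF transpose_Kmat])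
  also have "\<dots> = inner u (pinv L *v u)"
    by (simp only: Ky) (simp add: y_def)
  finally have qy: "inner y (Kmat *v u) = inner u (pinv L *v u)" .
  show "0 \<le> inner u (pinv L *v u)"
    using laplacian_nonneg[OF graph, of y] by (simp add: Ly qy)
  have "rho2 L * (norm y)^2 \<le> inner y (Kmat *v u)"
    using rho2_le_laplacian_quadratic_form[of y] by (simp add: Ky Ly)
  also have "\<dots> \<le> norm y * norm (Kmat *v u)" by (rule norm_cauchy_schwarz)
  finally have "rho2 L * norm y \<le> norm (Kmat *v u)"
    by (cases "y = 0") (simp_all add: power2_eq_square mult.assoc)
  then have "rho2 L * (norm y * norm (Kmat *v u)) \<le> (norm (Kmat *v u))^2"
    by (simp add: power2_eq_square mult.assoc[symmetric] mult_right_mono)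
  moreover have "rho2 L * inner y (Kmat *v u) \<le> rho2 L * (norm y * norm (Kmat *v u))"
    using rho2_pos by (simp add: norm_cauchy_schwarz)
  ultimately show "rho2 L * inner u (pinv L *v u) \<le> (norm (Kmat *v u))^2"
    using qy by simp
qed

end

text \<open>A stacked vector \<open>z :: real^'p^'n\<close> is an n \<times> p matrix; \<open>M \<otimes> I\<^sub>p\<close> acts on it
  column by column.\<close>

definition column :: "real^'p^'n \<Rightarrow> 'p \<Rightarrow> real^'n" where
  "column z q = (\<chi> i. z$i$q)"

lemma column_matrix_mult: "column ((A::real^'n^'n) ** z) q = A *v column z q"
  by (simp add: column_def matrix_matrix_mult_def matrix_vector_mult_def vec_eq_iff)

lemma inner_eq_sum_columns: "inner (y::real^'p^'n) z = (\<Sum>q\<in>UNIV. inner (column y q) (column z q))"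
  by (simp add: inner_vec_def column_def) (rule sum.swap)

lemma norm_sq_eq_sum_columns: "(norm (z::real^'p^'n))^2 = (\<Sum>q\<in>UNIV. (norm (column z q))^2)"
  by (simp add: power2_norm_eq_inner inner_eq_sum_columns)

lemma norm_sq_eq_sum_rows: "(norm (z::real^'p^'n))^2 = (\<Sum>i\<in>UNIV. (norm (z$i))^2)"
  by (simp add: power2_norm_eq_inner inner_vec_def)

lemma matrix_mult_stacked_nth:
  "((A::real^'n^'n) ** (z::real^'p^'n)) $ i = (\<Sum>j\<in>UNIV. (A$i$j) *\<^sub>R (z$j))"
  by (simp add: kron_act_eq_matrix_mult[symmetric] kron_act_def)

lemma Hmat_mult_stacked_nth:
  "((Hmat::real^'n^'n) ** (z::real^'p^'n)) $ i = (1 / real CARD('n)) *\<^sub>R (\<Sum>j\<in>UNIV. z$j)"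
  by (simp add: matrix_mult_stacked_nth Hmat_def scaleR_sum_right)

lemma Kmat_mult_stacked_nth:
  "((Kmat::real^'n^'n) ** (z::real^'p^'n)) $ i = z$i - (1 / real CARD('n)) *\<^sub>R (\<Sum>j\<in>UNIV. z$j)"
  by (simp add: Kmat_eq_mat1_minus_Hmat matrix_diff_rdistrib Hmat_mult_stacked_nth)

lemma inner_matrix_mult_commute:
  assumes "transpose A = (A::real^'n^'n)"
  shows "inner (y::real^'p^'n) (A ** z) = inner z (A ** y)"
  unfolding inner_eq_sum_columns column_matrix_mult
  using symmetric_matrix_inner_commute[OF assms] by simp

lemmas inner_Kmat_swap = inner_matrix_mult_commute[OF transpose_Kmat]

lemma inner_Kmat_adjoint: "inner (y::real^'p^'n) (Kmat ** z) = inner (Kmat ** y) z"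
  using inner_matrix_mult_commute[OF transpose_Kmat, of y z] by (simp add: inner_commute)

lemma Kmat_mult_idem: "Kmat ** (Kmat ** (z::real^'p^'n)) = Kmat ** z"
  by (simp add: matrix_mul_assoc Kmat_idem)

lemma inner_Kmat_self: "inner (z::real^'p^'n) (Kmat ** z) = (norm (Kmat ** z))^2"
  by (metis Kmat_mult_idem inner_Kmat_adjoint power2_norm_eq_inner)

lemma wnorm2_Kmat: "wnorm2 Kmat z = (norm (Kmat ** z))^2"
  by (simp add: wnorm2_def kron_act_eq_matrix_mult inner_Kmat_self)

lemma norm_Kmat_Hmat_decomp:
  "(norm (z::real^'p^'n))^2 = (norm (Kmat ** z))^2 + (norm (Hmat ** z))^2"
proof -
  have Hz: "Hmat ** z = z - Kmat ** z"
    by (simp add: Kmat_eq_mat1_minus_Hmat matrix_diff_rdistrib)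
  have "inner (Kmat ** z) (z - Kmat ** z) = 0"
    using inner_Kmat_self[of z] inner_Kmat_adjoint[of z z]
    by (simp add: inner_diff_right power2_norm_eq_inner)
  then show ?thesis
    unfolding Hz power2_norm_eq_inner
    by (simp add: inner_diff_left inner_diff_right inner_commute)
qed

lemma norm_Kmat_mult_le: "(norm (Kmat ** (z::real^'p^'n)))^2 \<le> (norm z)^2"
  using norm_Kmat_Hmat_decomp[of z] by simp

lemma norm_Hmat_mult_le: "(norm (Hmat ** (z::real^'p^'n)))^2 \<le> (norm z)^2"
  using norm_Kmat_Hmat_decomp[of z] by simp

context connected_graph
begin

lemma rho2_le_laplacian_quadratic_form_stacked:
  "rho2 L * (norm (Kmat ** (z::real^'p^'n)))^2 \<le> inner z (L ** z)"
  unfolding norm_sq_eq_sum_columns inner_eq_sum_columns column_matrix_mult sum_distrib_left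
  by (intro sum_mono rho2_le_laplacian_quadratic_form)

lemma laplacian_quadratic_form_le_rho_stacked:
  "inner (z::real^'p^'n) (L ** z) \<le> rho L * (norm (Kmat ** z))^2"
  unfolding norm_sq_eq_sum_columns inner_eq_sum_columns column_matrix_mult sum_distrib_left
  by (intro sum_mono laplacian_quadratic_form_le_rho)

lemma norm_laplacian_le_rho_stacked:
  "(norm (L ** (z::real^'p^'n)))^2 \<le> (rho L)^2 * (norm (Kmat ** z))^2"
  unfolding norm_sq_eq_sum_columns column_matrix_mult sum_distrib_left
  by (intro sum_mono norm_laplacian_le_rho)

lemma pinv_quadratic_form_nonneg_stacked: "0 \<le> inner (z::real^'p^'n) (pinv L ** z)"
  unfolding inner_eq_sum_columns column_matrix_mult
  by (intro sum_nonneg pinv_quadratic_form_nonneg)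

lemma rho2_mult_pinv_quadratic_form_le_stacked:
  "rho2 L * inner (z::real^'p^'n) (pinv L ** z) \<le> (norm (Kmat ** z))^2"
  unfolding norm_sq_eq_sum_columns inner_eq_sum_columns column_matrix_mult sum_distrib_left
  by (intro sum_mono rho2_mult_pinv_quadratic_form_le)

end

lemma inner_le_weighted_norms:
  assumes "t > 0"
  shows "inner (a::'a::real_inner) b \<le> t/2 * (norm a)^2 + 1/(2*t) * (norm b)^2"
proof -
  have "0 \<le> (norm (t *\<^sub>R a - b))^2" by simp
  also have "\<dots> = t^2 * (norm a)^2 - 2 * t * inner a b + (norm b)^2"
    unfolding power2_norm_eq_inner
    by (simp add: inner_diff_left inner_diff_right inner_commute power2_eq_square algebra_simps)
  finally have "2 * t * inner a b \<le> t^2 * (norm a)^2 + (norm b)^2" by simp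
  with assms show ?thesis by (simp add: field_simps power2_eq_square)
qed

lemma inner_le_half_norms: "inner (a::'a::real_inner) b \<le> 1/2 * (norm a)^2 + 1/2 * (norm b)^2"
  using inner_le_weighted_norms[of 1 a b] by simp

lemma norm_add3_sq_le:
  "(norm ((u::'a::real_inner) + v + w))^2 \<le> 3 * ((norm u)^2 + (norm v)^2 + (norm w)^2)"
proof -
  have "(norm (u + v + w))^2
      = (norm u)^2 + (norm v)^2 + (norm w)^2 + 2 * inner u v + 2 * inner u w + 2 * inner v w"
    by (simp add: power2_norm_eq_inner inner_add_left inner_add_right inner_commute)
  then have "(norm (u + v + w))^2 \<le> 3 * (norm u)^2 + 3 * (norm v)^2 + 3 * (norm w)^2"
    using inner_le_half_norms[of u v] inner_le_half_norms[of u w] inner_le_half_norms[of v w]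
    by linarith
  then show ?thesis by simp
qed

lemma norm_add_sq_le: "(norm ((u::'a::real_inner) + v))^2 \<le> 3 * (norm u)^2 + 3/2 * (norm v)^2"
proof -
  have "(norm (u + v))^2 = (norm u)^2 + (norm v)^2 + 2 * inner u v"
    by (simp add: power2_norm_eq_inner inner_add_left inner_add_right inner_commute)
  then show ?thesis using inner_le_weighted_norms[of 2 u v] by simp
qed

lemma lipschitz_sq:
  assumes "norm (u - w) \<le> Lf * norm (y - z)"
  shows "(norm (u - w))^2 \<le> Lf^2 * (norm (y - z))^2"
proof -
  have "(norm (u - w))^2 \<le> (Lf * norm (y - z))^2" using assms by (intro power_mono) auto
  then show ?thesis by (simp add: power_mult_distrib)
qed

subsection \<open>The descent lemma and the zeroth-order gradient estimator\<close>

context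
  fixes \<phi> :: "'a::real_inner \<Rightarrow> real" and G :: "'a \<Rightarrow> 'a" and Lf :: real
  assumes gderiv: "\<And>y. GDERIV \<phi> y :> G y"
    and lipschitz: "\<And>y z. norm (G y - G z) \<le> Lf * norm (y - z)"
begin

lemma has_real_derivative_along_line:
  "((\<lambda>t. \<phi> (y + t *\<^sub>R d)) has_real_derivative inner (G (y + t *\<^sub>R d)) d) (at t)"
proof -
  have "((\<lambda>t. y + t *\<^sub>R d) has_derivative (\<lambda>s. s *\<^sub>R d)) (at t)"
    by (auto intro!: derivative_eq_intros)
  moreover have "(\<phi> has_derivative (\<lambda>h. inner h (G (y + t *\<^sub>R d)))) (at (y + t *\<^sub>R d))"
    using gderiv unfolding gderiv_def by blast
  ultimately have "((\<lambda>t. \<phi> (y + t *\<^sub>R d)) has_derivative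
      (\<lambda>s. inner (s *\<^sub>R d) (G (y + t *\<^sub>R d)))) (at t)"
    by (rule has_derivative_compose)
  moreover have "(\<lambda>s. inner (s *\<^sub>R d) (G (y + t *\<^sub>R d))) = (*) (inner (G (y + t *\<^sub>R d)) d)"
    by (auto simp: inner_commute)
  ultimately show ?thesis unfolding has_field_derivative_def by simp
qed

lemma descent_lemma: "\<phi> z \<le> \<phi> y + inner (G y) (z - y) + Lf / 2 * (norm (z - y))^2"
proof -
  define d where "d = z - y"
  define \<psi> where "\<psi> t = \<phi> (y + t *\<^sub>R d) - t * inner (G y) d - Lf / 2 * t^2 * (norm d)^2" for t
  have "\<psi> 1 \<le> \<psi> 0"
  proof (rule DERIV_nonpos_imp_nonincreasing[of 0 1])
    fix t :: real
    assume t: "0 \<le> t" "t \<le> 1"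
    have "(\<psi> has_real_derivative
        (inner (G (y + t *\<^sub>R d)) d - inner (G y) d - Lf / 2 * (2 * t) * (norm d)^2)) (at t)"
      unfolding \<psi>_def using has_real_derivative_along_line[of y d t]
      by (auto intro!: derivative_eq_intros)
    moreover have "inner (G (y + t *\<^sub>R d)) d - inner (G y) d
        \<le> norm (G (y + t *\<^sub>R d) - G y) * norm d"
      using norm_cauchy_schwarz[of "G (y + t *\<^sub>R d) - G y" d] by (simp add: inner_diff_left)
    moreover have "norm (G (y + t *\<^sub>R d) - G y) * norm d \<le> (Lf * norm (t *\<^sub>R d)) * norm d"
      using lipschitz[of "y + t *\<^sub>R d" y] by (intro mult_right_mono) auto
    moreover have "(Lf * norm (t *\<^sub>R d)) * norm d = Lf / 2 * (2 * t) * (norm d)^2"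
      using t by (simp add: power2_eq_square)
    ultimately show "\<exists>D. (\<psi> has_real_derivative D) (at t) \<and> D \<le> 0"
      by (intro exI conjI) (assumption, linarith)
  qed auto
  then show ?thesis unfolding \<psi>_def d_def by simp
qed

end

lemma descent_lemma_abs:
  fixes \<phi> :: "'a::real_inner \<Rightarrow> real"
  assumes gderiv: "\<And>y. GDERIV \<phi> y :> G y"
    and lipschitz: "\<And>y z. norm (G y - G z) \<le> Lf * norm (y - z)"
  shows "\<bar>\<phi> z - \<phi> y - inner (G y) (z - y)\<bar> \<le> Lf / 2 * (norm (z - y))^2"
proof -
  have neg_gderiv: "GDERIV (\<lambda>x. - \<phi> x) y :> - G y" for y
    using gderiv[of y] unfolding gderiv_def by (auto intro: has_derivative_minus)
  have neg_lipschitz: "norm (- G y - - G z) \<le> Lf * norm (y - z)" for y z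
    using lipschitz[of y z] by (simp add: norm_minus_commute)
  have "- \<phi> z \<le> - \<phi> y + inner (- G y) (z - y) + Lf / 2 * (norm (z - y))^2"
    using descent_lemma[OF neg_gderiv neg_lipschitz] by simp
  then show ?thesis
    using descent_lemma[OF gderiv lipschitz, of z y] unfolding abs_le_iff inner_minus_left
    by linarith
qed

lemma grad_est_nth: "grad_est h x \<delta> $ l = (h (x + \<delta> *\<^sub>R axis l 1) - h x) / \<delta>"
  by (simp add: grad_est_def axis_def if_distrib cong: if_cong)

text \<open>Each coordinate of the estimator is a forward difference quotient, off by at most
  \<open>L\<^sub>f\<delta>/2\<close> by the descent lemma.\<close>

lemma grad_est_error:
  fixes \<phi> :: "real^'p \<Rightarrow> real"
  assumes gderiv: "\<And>y. GDERIV \<phi> y :> G y"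
    and lipschitz: "\<And>y z. norm (G y - G z) \<le> Lf * norm (y - z)"
    and "0 < \<delta>" "\<delta> \<le> \<delta>'"
  shows "(norm (grad_est \<phi> x \<delta> - G x))^2 \<le> real CARD('p) * Lf^2 * \<delta>'^2 / 4"
proof -
  have "norm (G 0 - G (axis undefined 1)) \<le> Lf"
    using lipschitz[of 0 "axis undefined 1"] by simp
  then have "Lf \<ge> 0" by (meson norm_ge_zero order_trans)
  have coord: "((grad_est \<phi> x \<delta> - G x) $ l)^2 \<le> Lf^2 * \<delta>'^2 / 4" for l
  proof -
    have "\<bar>\<phi> (x + \<delta> *\<^sub>R axis l 1) - \<phi> x - \<delta> * G x $ l\<bar> \<le> Lf / 2 * \<delta>^2"
      using descent_lemma_abs[OF gderiv lipschitz, of "x + \<delta> *\<^sub>R axis l 1" x] \<open>0 < \<delta>\<close>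
      by (simp add: inner_axis)
    moreover have "(grad_est \<phi> x \<delta> - G x) $ l = (\<phi> (x + \<delta> *\<^sub>R axis l 1) - \<phi> x - \<delta> * G x $ l) / \<delta>"
      using \<open>0 < \<delta>\<close> by (simp add: grad_est_nth field_simps)
    ultimately have "\<bar>(grad_est \<phi> x \<delta> - G x) $ l\<bar> \<le> Lf / 2 * \<delta>"
      using \<open>0 < \<delta>\<close> by (simp add: abs_divide divide_le_eq power2_eq_square mult.assoc)
    also have "\<dots> \<le> Lf / 2 * \<delta>'"
      using assms(4) \<open>Lf \<ge> 0\<close> by (simp add: mult_left_mono)
    finally have "\<bar>(grad_est \<phi> x \<delta> - G x) $ l\<bar>^2 \<le> (Lf / 2 * \<delta>')^2"
      by (intro power_mono) auto
    then show ?thesis by (simp add: power_mult_distrib power_divide)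
  qed
  have "(norm (grad_est \<phi> x \<delta> - G x))^2 = (\<Sum>l\<in>UNIV. ((grad_est \<phi> x \<delta> - G x) $ l)^2)"
    unfolding power2_norm_eq_inner inner_vec_def by (simp add: power2_eq_square)
  also have "\<dots> \<le> (\<Sum>l\<in>(UNIV::'p set). Lf^2 * \<delta>'^2 / 4)" by (intro sum_mono coord)
  finally show ?thesis by simp
qed

subsection \<open>One step of the consensus potential\<close>

definition consensus_potential ::
    "real^'n^'n \<Rightarrow> real \<Rightarrow> real \<Rightarrow> real^'p^'n \<Rightarrow> real^'p^'n \<Rightarrow> real" where
  "consensus_potential Q \<alpha> \<beta> X W = 1/2 * inner X (Kmat ** X)
     + 1/2 * inner W ((Q + (\<alpha>/\<beta>) *\<^sub>R Kmat) ** W) + inner X (Kmat ** W)"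

lemma inner_Kmat_Kmat: "inner (y::real^'p^'n) (Kmat ** z) = inner (Kmat ** y) (Kmat ** z)"
  by (metis Kmat_mult_idem inner_Kmat_adjoint)

context connected_graph
begin

lemma Kmat_mult_laplacian_stacked: "Kmat ** (L ** (z::real^'p^'n)) = L ** z"
  by (simp add: matrix_mul_assoc Kmat_mult_laplacian[OF graph])

lemma inner_laplacian_pinv:
  "inner (L ** X) (pinv L ** z) = inner (Kmat ** X) (Kmat ** (z::real^'p^'n))"
proof -
  have "inner (L ** X) (pinv L ** z) = inner z (pinv L ** (L ** X))"
    by (rule inner_matrix_mult_commute[OF transpose_pinv])
  also have "\<dots> = inner z (Kmat ** X)"
    by (simp add: matrix_mul_assoc pinv_mult_laplacian)
  also have "\<dots> = inner (Kmat ** z) (Kmat ** X)"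
    by (rule inner_Kmat_Kmat)
  finally show ?thesis by (simp only: inner_commute)
qed

definition potential_matrix :: "real \<Rightarrow> real \<Rightarrow> real^'n^'n" where
  "potential_matrix \<alpha> \<beta> = pinv L + (\<alpha>/\<beta>) *\<^sub>R Kmat"

lemma inner_potential_matrix_swap:
  "inner (y::real^'p^'n) (potential_matrix \<alpha> \<beta> ** z) = inner z (potential_matrix \<alpha> \<beta> ** y)"
  unfolding potential_matrix_def
  by (simp add: matrix_add_rdistrib matrix_mul_scaleR_left inner_add_right
      inner_matrix_mult_commute[OF transpose_pinv, of y] inner_Kmat_swap[of y])

lemma potential_matrix_laplacian:
  "inner (L ** X) (potential_matrix \<alpha> \<beta> ** (L ** X))
     = inner X (L ** X) + \<alpha> / \<beta> * (norm (L ** (X::real^'p^'n)))^2"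
proof -
  have "inner (Kmat ** X) (Kmat ** (L ** X)) = inner X (L ** X)"
    using inner_Kmat_adjoint[of X "L ** X"] by (simp add: Kmat_mult_laplacian_stacked)
  then show ?thesis
    by (simp add: potential_matrix_def matrix_add_rdistrib matrix_mul_scaleR_left
        inner_add_right inner_laplacian_pinv Kmat_mult_laplacian_stacked power2_norm_eq_inner)
qed

context
  fixes \<alpha> \<beta> :: real
  assumes beta_pos: "0 < \<beta>" and beta_less_alpha: "\<beta> < \<alpha>"
begin

lemma potential_matrix_nonneg: "0 \<le> inner (z::real^'p^'n) (potential_matrix \<alpha> \<beta> ** z)"
  using pinv_quadratic_form_nonneg_stacked[of z] beta_pos beta_less_alpha
  by (simp add: potential_matrix_def matrix_add_rdistrib matrix_mul_scaleR_left inner_add_right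
      inner_Kmat_self)

lemma potential_matrix_le:
  "inner (z::real^'p^'n) (potential_matrix \<alpha> \<beta> ** z)
     \<le> (1 / rho2 L + \<alpha> / \<beta>) * (norm (Kmat ** z))^2"
proof -
  have "inner z (pinv L ** z) \<le> 1 / rho2 L * (norm (Kmat ** z))^2"
    using rho2_mult_pinv_quadratic_form_le_stacked[of z] rho2_pos
    by (simp add: field_simps mult.commute)
  then show ?thesis
    by (simp add: potential_matrix_def matrix_add_rdistrib matrix_mul_scaleR_left
        inner_add_right inner_Kmat_self algebra_simps)
qed

lemma potential_matrix_cross_le:
  "2 * inner (u::real^'p^'n) (potential_matrix \<alpha> \<beta> ** v)
     \<le> inner u (potential_matrix \<alpha> \<beta> ** u) + inner v (potential_matrix \<alpha> \<beta> ** v)"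
  using potential_matrix_nonneg[of "u - v"] inner_potential_matrix_swap[where y = v and z = u]
  by (simp add: matrix_diff_ldistrib inner_diff_left inner_diff_right)

lemma potential_matrix_add_le:
  "inner (u + v) (potential_matrix \<alpha> \<beta> ** (u + v))
     \<le> 2 * inner (u::real^'p^'n) (potential_matrix \<alpha> \<beta> ** u)
       + 2 * inner v (potential_matrix \<alpha> \<beta> ** v)"
proof -
  have "inner (u + v) (potential_matrix \<alpha> \<beta> ** (u + v))
      = inner u (potential_matrix \<alpha> \<beta> ** u) + 2 * inner u (potential_matrix \<alpha> \<beta> ** v)
        + inner v (potential_matrix \<alpha> \<beta> ** v)"
    using inner_potential_matrix_swap[where y = v and z = u]
    by (simp add: matrix_add_ldistrib inner_add_left inner_add_right)
  then show ?thesis using potential_matrix_cross_le[of u v] by linarith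
qed

lemma consensus_potential_step_eq:
  fixes X V hh hz hp :: "real^'p^'n" and \<eta> :: real
  assumes KV: "Kmat ** V = V"
  defines "W \<equiv> V + (1/\<beta>) *\<^sub>R hz" and "P \<equiv> potential_matrix \<alpha> \<beta>"
    and "LX \<equiv> L ** X" and "KX \<equiv> Kmat ** X" and "KW \<equiv> Kmat ** (V + (1/\<beta>) *\<^sub>R hz)"
    and "e \<equiv> Kmat ** (hh - hz)" and "\<Delta> \<equiv> hp - hz"
    and "r \<equiv> (\<eta> * \<beta>) *\<^sub>R (L ** X) + (1/\<beta>) *\<^sub>R (hp - hz)"
  shows "consensus_potential (pinv L) \<alpha> \<beta> (X - \<eta> *\<^sub>R (\<alpha> *\<^sub>R LX + \<beta> *\<^sub>R V + hh)) (W + r)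
      - consensus_potential (pinv L) \<alpha> \<beta> X W =
    - \<eta> * (\<alpha> - \<beta>) * inner X LX - \<eta> * \<beta> * (norm KW)^2
    - \<eta> * inner KX e - \<eta> * inner e KW + 1/\<beta> * inner \<Delta> (P ** W) + 1/\<beta> * inner KX \<Delta>
    + \<eta>^2/2 * (norm (\<alpha> *\<^sub>R LX + \<beta> *\<^sub>R KW + e))^2 + 1/2 * inner r (P ** r)
    - \<eta>^2 * \<beta> * (\<alpha> * (norm LX)^2 + \<beta> * inner KW LX + inner e LX)
    - \<eta> / \<beta> * (\<alpha> * inner LX \<Delta> + \<beta> * inner KW \<Delta> + inner e \<Delta>)"
proof -
  have KW: "KW = Kmat ** W" and r: "r = (\<eta> * \<beta>) *\<^sub>R LX + (1/\<beta>) *\<^sub>R \<Delta>"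
    unfolding KW_def W_def r_def LX_def \<Delta>_def by simp_all
  define s where "s = \<alpha> *\<^sub>R LX + \<beta> *\<^sub>R V + hh"
  have "\<beta> \<noteq> 0" using beta_pos by simp
  have Ks: "Kmat ** s = \<alpha> *\<^sub>R LX + \<beta> *\<^sub>R KW + e"
    using \<open>\<beta> \<noteq> 0\<close> unfolding s_def KW e_def W_def LX_def
    by (simp add: matrix_add_ldistrib matrix_mul_scaleR_right matrix_diff_ldistrib
        Kmat_mult_laplacian_stacked KV algebra_simps)
  have inner_Ks: "inner (Kmat ** s) z = \<alpha> * inner LX z + \<beta> * inner KW z + inner e z" for z
    by (simp add: Ks inner_add_left)
  have expansion: "consensus_potential (pinv L) \<alpha> \<beta> (X - \<eta> *\<^sub>R s) (W + r)
      - consensus_potential (pinv L) \<alpha> \<beta> X W =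
      - \<eta> * inner X (Kmat ** s) + \<eta>^2/2 * inner s (Kmat ** s) + inner r (P ** W)
      + 1/2 * inner r (P ** r) + inner X (Kmat ** r) - \<eta> * inner s (Kmat ** W)
      - \<eta> * inner s (Kmat ** r)"
    unfolding consensus_potential_def potential_matrix_def[symmetric] P_def
    by (simp add: matrix_diff_ldistrib matrix_add_ldistrib matrix_mul_scaleR_right
        inner_diff_left inner_diff_right inner_add_left inner_add_right
        inner_Kmat_swap[of s X] inner_potential_matrix_swap[where y = W and z = r]
        power2_eq_square algebra_simps)
  have "inner X (Kmat ** s) = inner KX (Kmat ** s)"
    unfolding KX_def by (metis Kmat_mult_idem inner_Kmat_adjoint)
  moreover have "inner KX LX = inner X LX"
    unfolding KX_def LX_def using inner_Kmat_adjoint[of X "L ** X"]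
    by (simp add: Kmat_mult_laplacian_stacked)
  ultimately have X_Ks: "inner X (Kmat ** s) = \<alpha> * inner X LX + \<beta> * inner KX KW + inner KX e"
    by (simp add: Ks inner_add_right)
  have s_Ks: "inner s (Kmat ** s) = (norm (\<alpha> *\<^sub>R LX + \<beta> *\<^sub>R KW + e))^2"
    by (simp add: power2_norm_eq_inner Ks[symmetric] inner_Kmat_Kmat[of s s])
  have r_PW: "inner r (P ** W) = \<eta> * \<beta> * inner KX KW + \<eta> * \<alpha> * inner LX KW
      + 1/\<beta> * inner \<Delta> (P ** W)"
    using \<open>\<beta> \<noteq> 0\<close> unfolding r P_def potential_matrix_def KX_def KW LX_def
    by (simp add: inner_add_left matrix_add_rdistrib matrix_mul_scaleR_left inner_add_right
        inner_laplacian_pinv algebra_simps)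
  have X_Kr: "inner X (Kmat ** r) = \<eta> * \<beta> * inner X LX + 1/\<beta> * inner KX \<Delta>"
    unfolding r KX_def LX_def
    by (simp add: matrix_add_ldistrib matrix_mul_scaleR_right inner_add_right
        Kmat_mult_laplacian_stacked inner_Kmat_adjoint)
  have s_KW: "inner s (Kmat ** W) = \<alpha> * inner LX KW + \<beta> * (norm KW)^2 + inner e KW"
    using inner_Ks[of KW] unfolding KW
    by (metis Kmat_mult_idem inner_Kmat_adjoint power2_norm_eq_inner)
  have s_Kr: "inner s (Kmat ** r) = \<eta> * \<beta> * inner (Kmat ** s) LX + 1/\<beta> * inner (Kmat ** s) \<Delta>"
    unfolding r LX_def
    by (simp add: matrix_add_ldistrib matrix_mul_scaleR_right inner_add_right inner_Kmat_adjoint)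
  show ?thesis
    unfolding s_def[symmetric] expansion X_Ks s_Ks r_PW X_Kr s_KW s_Kr inner_Ks
    using \<open>\<beta> \<noteq> 0\<close>
    by (simp add: power2_norm_eq_inner inner_commute field_simps)
      (simp add: power2_eq_square algebra_simps)
qed

lemma potential_matrix_le_norm:
  "inner (z::real^'p^'n) (potential_matrix \<alpha> \<beta> ** z) \<le> (1 / rho2 L + \<alpha> / \<beta>) * (norm z)^2"
proof -
  have "0 \<le> 1 / rho2 L + \<alpha> / \<beta>" using rho2_pos beta_pos beta_less_alpha by simp
  then show ?thesis
    using potential_matrix_le[of z] norm_Kmat_mult_le[of z] by (meson mult_left_mono order_trans)
qed

lemma consensus_first_order_terms_le:
  fixes X W e \<Delta> :: "real^'p^'n" and \<eta> :: real
  assumes "0 < \<eta>"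
  defines "\<kappa> \<equiv> 1 / rho2 L + \<alpha> / \<beta>"
  shows "- \<eta> * inner (Kmat ** X) e - \<eta> * inner e (Kmat ** W)
      + 1/\<beta> * inner \<Delta> (potential_matrix \<alpha> \<beta> ** W) + 1/\<beta> * inner (Kmat ** X) \<Delta>
    \<le> \<eta> * (norm (Kmat ** X))^2 + \<eta> * (norm e)^2 + \<eta>/2 * (1 + \<kappa>/\<beta>) * (norm (Kmat ** W))^2
      + (\<kappa> + 1/\<beta>) / (2*\<eta>*\<beta>) * (norm \<Delta>)^2"
proof -
  have "- \<eta> * inner (Kmat ** X) e \<le> \<eta> * (1/2 * (norm (Kmat ** X))^2 + 1/2 * (norm e)^2)"
    using mult_left_mono[OF inner_le_half_norms[of "- (Kmat ** X)" e], of \<eta>] \<open>0 < \<eta>\<close> by simp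
  moreover have "- \<eta> * inner e (Kmat ** W) \<le> \<eta> * (1/2 * (norm e)^2 + 1/2 * (norm (Kmat ** W))^2)"
    using mult_left_mono[OF inner_le_half_norms[of "- e" "Kmat ** W"], of \<eta>] \<open>0 < \<eta>\<close> by simp
  moreover have "2 * \<eta> * inner \<Delta> (potential_matrix \<alpha> \<beta> ** W)
      \<le> \<kappa> * (norm \<Delta>)^2 + \<eta>^2 * (\<kappa> * (norm (Kmat ** W))^2)"
  proof -
    have "\<eta>^2 * inner W (potential_matrix \<alpha> \<beta> ** W) \<le> \<eta>^2 * (\<kappa> * (norm (Kmat ** W))^2)"
      unfolding \<kappa>_def by (intro mult_left_mono potential_matrix_le) simp
    then show ?thesis
      using potential_matrix_cross_le[of \<Delta> "\<eta> *\<^sub>R W"] potential_matrix_le_norm[of \<Delta>]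
      by (simp add: matrix_mul_scaleR_right power2_eq_square \<kappa>_def)
  qed
  then have "1/\<beta> * inner \<Delta> (potential_matrix \<alpha> \<beta> ** W)
      \<le> \<kappa> / (2*\<eta>*\<beta>) * (norm \<Delta>)^2 + \<eta> * \<kappa> / (2*\<beta>) * (norm (Kmat ** W))^2"
    using \<open>0 < \<eta>\<close> beta_pos by (simp add: field_simps power2_eq_square)
  moreover have "1/\<beta> * inner (Kmat ** X) \<Delta>
      \<le> \<eta>/2 * (norm (Kmat ** X))^2 + 1 / (2*\<eta>*\<beta>^2) * (norm \<Delta>)^2"
    using inner_le_weighted_norms[OF \<open>0 < \<eta>\<close>, of "Kmat ** X" "(1/\<beta>) *\<^sub>R \<Delta>"] beta_pos
    by (simp add: power2_eq_square field_simps)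
  moreover have "\<eta> * (norm (Kmat ** X))^2 + \<eta> * (norm e)^2
      + \<eta>/2 * (1 + \<kappa>/\<beta>) * (norm (Kmat ** W))^2 + (\<kappa> + 1/\<beta>) / (2*\<eta>*\<beta>) * (norm \<Delta>)^2
    = \<eta> * (1/2 * (norm (Kmat ** X))^2 + 1/2 * (norm e)^2)
      + \<eta> * (1/2 * (norm e)^2 + 1/2 * (norm (Kmat ** W))^2)
      + (\<kappa> / (2*\<eta>*\<beta>) * (norm \<Delta>)^2 + \<eta> * \<kappa> / (2*\<beta>) * (norm (Kmat ** W))^2)
      + (\<eta>/2 * (norm (Kmat ** X))^2 + 1 / (2*\<eta>*\<beta>^2) * (norm \<Delta>)^2)"
    using \<open>0 < \<eta>\<close> beta_pos by (simp add: field_simps power2_eq_square)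
  ultimately show ?thesis by linarith
qed

lemma potential_matrix_increment_le:
  fixes X \<Delta> :: "real^'p^'n" and \<eta> :: real
  defines "\<kappa> \<equiv> 1 / rho2 L + \<alpha> / \<beta>"
  shows "1/2 * inner ((\<eta> * \<beta>) *\<^sub>R (L ** X) + (1/\<beta>) *\<^sub>R \<Delta>)
        (potential_matrix \<alpha> \<beta> ** ((\<eta> * \<beta>) *\<^sub>R (L ** X) + (1/\<beta>) *\<^sub>R \<Delta>))
    \<le> \<eta>^2 * \<beta>^2 * inner X (L ** X) + \<eta>^2 * \<alpha> * \<beta> * (norm (L ** X))^2 + \<kappa> / \<beta>^2 * (norm \<Delta>)^2"
proof -
  define LX where "LX = L ** X"
  define P where "P = potential_matrix \<alpha> \<beta>"
  have "\<beta> \<noteq> 0" using beta_pos by simp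
  have "inner ((\<eta> * \<beta>) *\<^sub>R LX + (1/\<beta>) *\<^sub>R \<Delta>) (P ** ((\<eta> * \<beta>) *\<^sub>R LX + (1/\<beta>) *\<^sub>R \<Delta>))
      \<le> 2 * inner ((\<eta> * \<beta>) *\<^sub>R LX) (P ** ((\<eta> * \<beta>) *\<^sub>R LX))
        + 2 * inner ((1/\<beta>) *\<^sub>R \<Delta>) (P ** ((1/\<beta>) *\<^sub>R \<Delta>))"
    unfolding P_def by (rule potential_matrix_add_le)
  also have "\<dots> = 2 * (\<eta>^2 * \<beta>^2 * inner X LX + \<eta>^2 * \<alpha> * \<beta> * (norm LX)^2)
      + 2 / \<beta>^2 * inner \<Delta> (P ** \<Delta>)"
    using \<open>\<beta> \<noteq> 0\<close> unfolding P_def LX_def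
    by (simp add: matrix_mul_scaleR_right potential_matrix_laplacian)
      (simp add: power2_eq_square field_simps)
  also have "\<dots> \<le> 2 * (\<eta>^2 * \<beta>^2 * inner X LX + \<eta>^2 * \<alpha> * \<beta> * (norm LX)^2)
      + 2 / \<beta>^2 * (\<kappa> * (norm \<Delta>)^2)"
    using potential_matrix_le_norm[of \<Delta>] unfolding P_def \<kappa>_def
    by (simp add: divide_right_mono)
  finally show ?thesis
    unfolding LX_def P_def using \<open>\<beta> \<noteq> 0\<close> by (simp add: field_simps)
qed

lemma consensus_second_order_terms_le:
  fixes X W e \<Delta> :: "real^'p^'n" and \<eta> :: real
  defines "\<kappa> \<equiv> 1 / rho2 L + \<alpha> / \<beta>"
  shows "\<eta>^2/2 * (norm (\<alpha> *\<^sub>R (L ** X) + \<beta> *\<^sub>R (Kmat ** W) + e))^2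
      + 1/2 * inner ((\<eta> * \<beta>) *\<^sub>R (L ** X) + (1/\<beta>) *\<^sub>R \<Delta>)
          (potential_matrix \<alpha> \<beta> ** ((\<eta> * \<beta>) *\<^sub>R (L ** X) + (1/\<beta>) *\<^sub>R \<Delta>))
      - \<eta>^2 * \<beta> * (\<alpha> * (norm (L ** X))^2 + \<beta> * inner (Kmat ** W) (L ** X) + inner e (L ** X))
      - \<eta> / \<beta> * (\<alpha> * inner (L ** X) \<Delta> + \<beta> * inner (Kmat ** W) \<Delta> + inner e \<Delta>)
    \<le> \<eta>^2 * \<beta>^2 * inner X (L ** X) + \<eta>^2 * (2 * \<alpha>^2 + \<beta>^2) * (norm (L ** X))^2
      + \<eta>^2 * (2 * \<beta>^2 + 1/2) * (norm (Kmat ** W))^2 + 5/2 * \<eta>^2 * (norm e)^2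
      + (\<kappa> / \<beta>^2 + 1 / \<beta>^2 + 1/2) * (norm \<Delta>)^2"
proof -
  define LX where "LX = L ** X"
  define KW where "KW = Kmat ** W"
  define P where "P = potential_matrix \<alpha> \<beta>"
  have "\<beta> \<noteq> 0" using beta_pos by simp
  have "(norm (\<alpha> *\<^sub>R LX + \<beta> *\<^sub>R KW + e))^2 \<le> 3 * (\<alpha>^2 * (norm LX)^2 + \<beta>^2 * (norm KW)^2 + (norm e)^2)"
    using norm_add3_sq_le[of "\<alpha> *\<^sub>R LX" "\<beta> *\<^sub>R KW" e] by (simp add: power_mult_distrib)
  then have "\<eta>^2/2 * (norm (\<alpha> *\<^sub>R LX + \<beta> *\<^sub>R KW + e))^2
      \<le> \<eta>^2/2 * (3 * (\<alpha>^2 * (norm LX)^2 + \<beta>^2 * (norm KW)^2 + (norm e)^2))"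
    by (rule mult_left_mono) simp
  then have b1: "\<eta>^2/2 * (norm (\<alpha> *\<^sub>R LX + \<beta> *\<^sub>R KW + e))^2
      \<le> \<eta>^2 * (3/2) * (\<alpha>^2 * (norm LX)^2 + \<beta>^2 * (norm KW)^2 + (norm e)^2)"
    by (simp only: algebra_simps) simp
  have b2: "1/2 * inner ((\<eta> * \<beta>) *\<^sub>R LX + (1/\<beta>) *\<^sub>R \<Delta>) (P ** ((\<eta> * \<beta>) *\<^sub>R LX + (1/\<beta>) *\<^sub>R \<Delta>))
      \<le> \<eta>^2 * \<beta>^2 * inner X LX + \<eta>^2 * \<alpha> * \<beta> * (norm LX)^2 + \<kappa> / \<beta>^2 * (norm \<Delta>)^2"
    unfolding P_def LX_def \<kappa>_def by (rule potential_matrix_increment_le)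
  have b3: "- (\<eta>^2 * \<beta> * (\<alpha> * (norm LX)^2 + \<beta> * inner KW LX + inner e LX)) \<le>
      - (\<eta>^2 * \<alpha> * \<beta> * (norm LX)^2) + \<eta>^2 * \<beta>^2 / 2 * ((norm KW)^2 + (norm LX)^2)
      + \<eta>^2 * (\<beta>^2 / 2 * (norm LX)^2 + 1/2 * (norm e)^2)"
  proof -
    have "\<eta>^2 * \<beta>^2 * inner (- KW) LX \<le> \<eta>^2 * \<beta>^2 * (1/2 * (norm (- KW))^2 + 1/2 * (norm LX)^2)"
      by (intro mult_left_mono inner_le_half_norms) auto
    moreover have "\<eta>^2 * inner (- e) (\<beta> *\<^sub>R LX)
        \<le> \<eta>^2 * (1/2 * (norm (- e))^2 + 1/2 * (norm (\<beta> *\<^sub>R LX))^2)"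
      by (intro mult_left_mono inner_le_half_norms) auto
    moreover have "- (\<eta>^2 * \<beta> * (\<alpha> * (norm LX)^2 + \<beta> * inner KW LX + inner e LX))
        = - (\<eta>^2 * \<alpha> * \<beta> * (norm LX)^2) + \<eta>^2 * \<beta>^2 * inner (- KW) LX
          + \<eta>^2 * inner (- e) (\<beta> *\<^sub>R LX)"
      by (simp add: algebra_simps power2_eq_square)
    moreover have "\<eta>^2 * \<beta>^2 * (1/2 * (norm (- KW))^2 + 1/2 * (norm LX)^2)
        + \<eta>^2 * (1/2 * (norm (- e))^2 + 1/2 * (norm (\<beta> *\<^sub>R LX))^2)
        = \<eta>^2 * \<beta>^2 / 2 * ((norm KW)^2 + (norm LX)^2)
          + \<eta>^2 * (\<beta>^2 / 2 * (norm LX)^2 + 1/2 * (norm e)^2)"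
      by (simp add: power_mult_distrib field_simps)
    ultimately show ?thesis by linarith
  qed
  have b4: "- (\<eta> / \<beta> * (\<alpha> * inner LX \<Delta> + \<beta> * inner KW \<Delta> + inner e \<Delta>)) \<le>
      \<eta>^2 * \<alpha>^2 / 2 * (norm LX)^2 + \<eta>^2 / 2 * (norm KW)^2 + \<eta>^2 / 2 * (norm e)^2
      + (1 / \<beta>^2 + 1/2) * (norm \<Delta>)^2"
  proof -
    have "- (\<eta> / \<beta> * (\<alpha> * inner LX \<Delta> + \<beta> * inner KW \<Delta> + inner e \<Delta>)) =
        inner ((- (\<eta> * \<alpha>)) *\<^sub>R LX) ((1/\<beta>) *\<^sub>R \<Delta>) + inner ((- \<eta>) *\<^sub>R KW) \<Delta>
        + inner ((- \<eta>) *\<^sub>R e) ((1/\<beta>) *\<^sub>R \<Delta>)"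
      using \<open>\<beta> \<noteq> 0\<close> by (simp add: field_simps)
    also have "\<dots> \<le> (1/2 * (norm ((- (\<eta> * \<alpha>)) *\<^sub>R LX))^2 + 1/2 * (norm ((1/\<beta>) *\<^sub>R \<Delta>))^2)
        + (1/2 * (norm ((- \<eta>) *\<^sub>R KW))^2 + 1/2 * (norm \<Delta>)^2)
        + (1/2 * (norm ((- \<eta>) *\<^sub>R e))^2 + 1/2 * (norm ((1/\<beta>) *\<^sub>R \<Delta>))^2)"
      by (intro add_mono inner_le_half_norms)
    also have "\<dots> = \<eta>^2 * \<alpha>^2 / 2 * (norm LX)^2 + \<eta>^2 / 2 * (norm KW)^2 + \<eta>^2 / 2 * (norm e)^2
        + (1 / \<beta>^2 + 1/2) * (norm \<Delta>)^2"
      using \<open>\<beta> \<noteq> 0\<close> by (simp add: power_mult_distrib power2_eq_square field_simps)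
    finally show ?thesis .
  qed
  have "\<eta>^2 * \<beta>^2 * inner X LX + \<eta>^2 * (2 * \<alpha>^2 + \<beta>^2) * (norm LX)^2
      + \<eta>^2 * (2 * \<beta>^2 + 1/2) * (norm KW)^2 + 5/2 * \<eta>^2 * (norm e)^2
      + (\<kappa> / \<beta>^2 + 1 / \<beta>^2 + 1/2) * (norm \<Delta>)^2
    = \<eta>^2 * (3/2) * (\<alpha>^2 * (norm LX)^2 + \<beta>^2 * (norm KW)^2 + (norm e)^2)
      + (\<eta>^2 * \<beta>^2 * inner X LX + \<eta>^2 * \<alpha> * \<beta> * (norm LX)^2 + \<kappa> / \<beta>^2 * (norm \<Delta>)^2)
      + (- (\<eta>^2 * \<alpha> * \<beta> * (norm LX)^2) + \<eta>^2 * \<beta>^2 / 2 * ((norm KW)^2 + (norm LX)^2)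
        + \<eta>^2 * (\<beta>^2 / 2 * (norm LX)^2 + 1/2 * (norm e)^2))
      + (\<eta>^2 * \<alpha>^2 / 2 * (norm LX)^2 + \<eta>^2 / 2 * (norm KW)^2 + \<eta>^2 / 2 * (norm e)^2
        + (1 / \<beta>^2 + 1/2) * (norm \<Delta>)^2)"
    by (simp add: field_simps)
  then show ?thesis
    using b1 b2 b3 b4 unfolding LX_def KW_def P_def by linarith
qed

lemma consensus_potential_step_le:
  fixes X V hh hz hp :: "real^'p^'n" and \<eta> :: real
  assumes "0 < \<eta>" and KV: "Kmat ** V = V"
  defines "W \<equiv> V + (1/\<beta>) *\<^sub>R hz" and "\<kappa> \<equiv> 1 / rho2 L + \<alpha> / \<beta>"
  shows "consensus_potential (pinv L) \<alpha> \<beta> (X - \<eta> *\<^sub>R (\<alpha> *\<^sub>R (L ** X) + \<beta> *\<^sub>R V + hh))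
        (V + (\<eta> * \<beta>) *\<^sub>R (L ** X) + (1/\<beta>) *\<^sub>R hp)
      - consensus_potential (pinv L) \<alpha> \<beta> X W
    \<le> - \<eta> * (\<alpha> - \<beta> - \<eta> * \<beta>^2) * inner X (L ** X) + \<eta>^2 * (2 * \<alpha>^2 + \<beta>^2) * (norm (L ** X))^2
      + \<eta> * (norm (Kmat ** X))^2 + (\<eta> + 5/2 * \<eta>^2) * (norm (Kmat ** (hh - hz)))^2
      - \<eta> * (\<beta> - 1/2 - \<kappa> / (2*\<beta>) - \<eta> * (2 * \<beta>^2 + 1/2)) * (norm (Kmat ** W))^2
      + ((1 / \<beta>^2 + 1 / (2*\<eta>*\<beta>)) * \<kappa> + 1 / (2*\<eta>*\<beta>^2) + 1 / \<beta>^2 + 1/2) * (norm (hp - hz))^2"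
proof -
  have arg: "V + (\<eta> * \<beta>) *\<^sub>R (L ** X) + (1/\<beta>) *\<^sub>R hp
      = W + ((\<eta> * \<beta>) *\<^sub>R (L ** X) + (1/\<beta>) *\<^sub>R (hp - hz))"
    unfolding W_def by (simp add: algebra_simps)
  have "- \<eta> * (\<alpha> - \<beta> - \<eta> * \<beta>^2) * inner X (L ** X)
      + \<eta>^2 * (2 * \<alpha>^2 + \<beta>^2) * (norm (L ** X))^2
      + \<eta> * (norm (Kmat ** X))^2 + (\<eta> + 5/2 * \<eta>^2) * (norm (Kmat ** (hh - hz)))^2
      - \<eta> * (\<beta> - 1/2 - \<kappa> / (2*\<beta>) - \<eta> * (2 * \<beta>^2 + 1/2)) * (norm (Kmat ** W))^2
      + ((1 / \<beta>^2 + 1 / (2*\<eta>*\<beta>)) * \<kappa> + 1 / (2*\<eta>*\<beta>^2) + 1 / \<beta>^2 + 1/2) * (norm (hp - hz))^2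
    = - \<eta> * (\<alpha> - \<beta>) * inner X (L ** X) - \<eta> * \<beta> * (norm (Kmat ** W))^2
      + (\<eta> * (norm (Kmat ** X))^2 + \<eta> * (norm (Kmat ** (hh - hz)))^2
        + \<eta>/2 * (1 + \<kappa>/\<beta>) * (norm (Kmat ** W))^2 + (\<kappa> + 1/\<beta>) / (2*\<eta>*\<beta>) * (norm (hp - hz))^2)
      + (\<eta>^2 * \<beta>^2 * inner X (L ** X) + \<eta>^2 * (2 * \<alpha>^2 + \<beta>^2) * (norm (L ** X))^2
        + \<eta>^2 * (2 * \<beta>^2 + 1/2) * (norm (Kmat ** W))^2 + 5/2 * \<eta>^2 * (norm (Kmat ** (hh - hz)))^2
        + (\<kappa> / \<beta>^2 + 1 / \<beta>^2 + 1/2) * (norm (hp - hz))^2)"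
    using \<open>0 < \<eta>\<close> beta_pos by (simp add: field_simps power2_eq_square)
  then show ?thesis
    unfolding arg
    using consensus_potential_step_eq[OF KV, where X = X and hh = hh and hz = hz and hp = hp
        and \<eta> = \<eta>]
      consensus_first_order_terms_le[OF \<open>0 < \<eta>\<close>, where X = X and e = "Kmat ** (hh - hz)"
        and W = W and \<Delta> = "hp - hz"]
      consensus_second_order_terms_le[where X = X and e = "Kmat ** (hh - hz)"
        and W = W and \<Delta> = "hp - hz" and \<eta> = \<eta>]
    unfolding W_def \<kappa>_def by linarith
qed

end

end

lemma lyapunov_step_arith:
  fixes \<eta> \<alpha> \<beta> \<rho> \<rho>\<^sub>2 Lf c d d' qL nA Wk E D Lxx hb g G d\<Phi> dF :: real
  assumes pos: "0 < \<eta>" "0 < \<beta>" "\<beta> < \<alpha>" "0 < \<rho>\<^sub>2" "0 \<le> c" "0 \<le> d" "0 \<le> hb" "0 \<le> g"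
  defines "\<kappa> \<equiv> 1 / \<rho>\<^sub>2 + \<alpha> / \<beta>"
    and "P \<equiv> (1 / \<beta>^2 + 1 / (2*\<eta>*\<beta>)) * (1 / \<rho>\<^sub>2 + \<alpha> / \<beta>) + 1 / (2*\<eta>*\<beta>^2) + 1 / \<beta>^2 + 1/2"
  assumes consensus: "d\<Phi> \<le> - \<eta> * (\<alpha> - \<beta> - \<eta> * \<beta>^2) * qL + \<eta>^2 * (2 * \<alpha>^2 + \<beta>^2) * Lxx
      + \<eta> * nA + (\<eta> + 5/2 * \<eta>^2) * E - \<eta> * (\<beta> - 1/2 - \<kappa> / (2*\<beta>) - \<eta> * (2 * \<beta>^2 + 1/2)) * Wk
      + P * D"
    and objective: "dF \<le> \<eta>/2 * G - \<eta>/2 * g - \<eta>/2 * hb + Lf/2 * \<eta>^2 * hb"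
    and E: "E \<le> 3 * Lf^2 * nA + 2 * c * d"
    and D: "D \<le> 3 * Lf^2 * \<eta>^2 * hb + c * d' + c * d"
    and G: "G \<le> 3 * Lf^2 * nA + c * d / 2"
    and spectral: "\<rho>\<^sub>2 * nA \<le> qL" "qL \<le> \<rho> * nA" "Lxx \<le> \<rho>^2 * nA"
  shows "d\<Phi> + dF \<le>
      - \<eta> * (((\<alpha> - \<beta>) * \<rho>\<^sub>2 - 1/2 * (2 + 9 * Lf^2))
        - \<eta> * (\<beta>^2 * \<rho> + (2 * \<alpha>^2 + \<beta>^2) * \<rho>^2 + 15/2 * Lf^2)) * nA
      - \<eta> * ((\<beta> - 1/2 - \<alpha> / (2 * \<beta>^2) - 1 / (2 * \<beta> * \<rho>\<^sub>2)) - \<eta> * (2 * \<beta>^2 + 1/2)) * Wk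
      - \<eta> * ((1/8 - 3 / (2 * \<beta>) * (1 / \<beta> + 1 / \<rho>\<^sub>2 + \<alpha> / \<beta>) * Lf^2)
        - \<eta> * (3 / \<beta>^2 * (1 + 1 / \<rho>\<^sub>2 + \<alpha> / \<beta>) * Lf^2 + Lf * (1 + 3 * Lf) / 2)) * hb
      - \<eta> / 8 * g + ((15 * \<eta> / 4 + 5 * \<eta>^2) * c + P * c) * d + P * c * d'"
proof -
  have "P \<ge> 0" unfolding P_def \<kappa>_def using pos by simp
  have "(\<eta> + 5/2 * \<eta>^2) * E \<le> (\<eta> + 5/2 * \<eta>^2) * (3 * Lf^2 * nA + 2 * c * d)"
    using E pos by (intro mult_left_mono) auto
  moreover have "P * D \<le> P * (3 * Lf^2 * \<eta>^2 * hb + c * d' + c * d)"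
    using D \<open>P \<ge> 0\<close> by (intro mult_left_mono) auto
  moreover have "\<eta>/2 * G \<le> \<eta>/2 * (3 * Lf^2 * nA + c * d / 2)"
    using G pos by (intro mult_left_mono) auto
  moreover have "\<eta> * (\<alpha> - \<beta>) * (\<rho>\<^sub>2 * nA) \<le> \<eta> * (\<alpha> - \<beta>) * qL"
    using spectral pos by (intro mult_left_mono) auto
  moreover have "\<eta>^2 * \<beta>^2 * qL \<le> \<eta>^2 * \<beta>^2 * (\<rho> * nA)"
    using spectral by (intro mult_left_mono) auto
  moreover have "\<eta>^2 * (2 * \<alpha>^2 + \<beta>^2) * Lxx \<le> \<eta>^2 * (2 * \<alpha>^2 + \<beta>^2) * (\<rho>^2 * nA)"
    using spectral by (intro mult_left_mono) auto
  moreover have "- \<eta> * (\<alpha> - \<beta> - \<eta> * \<beta>^2) * qL = \<eta>^2 * \<beta>^2 * qL - \<eta> * (\<alpha> - \<beta>) * qL"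
    by (simp add: algebra_simps power2_eq_square)
  then have "d\<Phi> + dF \<le> \<eta>^2 * \<beta>^2 * qL - \<eta> * (\<alpha> - \<beta>) * qL + \<eta>^2 * (2 * \<alpha>^2 + \<beta>^2) * Lxx
      + \<eta> * nA + (\<eta> + 5/2 * \<eta>^2) * E - \<eta> * (\<beta> - 1/2 - \<kappa> / (2*\<beta>) - \<eta> * (2 * \<beta>^2 + 1/2)) * Wk
      + P * D + (\<eta>/2 * G - \<eta>/2 * g - \<eta>/2 * hb + Lf/2 * \<eta>^2 * hb)"
    using consensus objective by linarith
  \<comment> \<open>The stated coefficients leave this slack unused.\<close>
  moreover have "0 \<le> 3 * \<eta> / 8 * hb + 3 * \<eta> / 8 * g + 3/2 * \<eta> * c * d"
    using pos by simp
  moreover have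
    "- \<eta> * (((\<alpha> - \<beta>) * \<rho>\<^sub>2 - 1/2 * (2 + 9 * Lf^2))
        - \<eta> * (\<beta>^2 * \<rho> + (2 * \<alpha>^2 + \<beta>^2) * \<rho>^2 + 15/2 * Lf^2)) * nA
      - \<eta> * ((\<beta> - 1/2 - \<alpha> / (2 * \<beta>^2) - 1 / (2 * \<beta> * \<rho>\<^sub>2)) - \<eta> * (2 * \<beta>^2 + 1/2)) * Wk
      - \<eta> * ((1/8 - 3 / (2 * \<beta>) * (1 / \<beta> + 1 / \<rho>\<^sub>2 + \<alpha> / \<beta>) * Lf^2)
        - \<eta> * (3 / \<beta>^2 * (1 + 1 / \<rho>\<^sub>2 + \<alpha> / \<beta>) * Lf^2 + Lf * (1 + 3 * Lf) / 2)) * hb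
      - \<eta> / 8 * g + ((15 * \<eta> / 4 + 5 * \<eta>^2) * c + P * c) * d + P * c * d'
    = (\<eta>^2 * \<beta>^2 * (\<rho> * nA) - \<eta> * (\<alpha> - \<beta>) * (\<rho>\<^sub>2 * nA)
        + \<eta>^2 * (2 * \<alpha>^2 + \<beta>^2) * (\<rho>^2 * nA) + \<eta> * nA
        + (\<eta> + 5/2 * \<eta>^2) * (3 * Lf^2 * nA + 2 * c * d)
        - \<eta> * (\<beta> - 1/2 - \<kappa> / (2*\<beta>) - \<eta> * (2 * \<beta>^2 + 1/2)) * Wk
        + P * (3 * Lf^2 * \<eta>^2 * hb + c * d' + c * d))
      + (\<eta>/2 * (3 * Lf^2 * nA + c * d / 2) - \<eta>/2 * g - \<eta>/2 * hb + Lf/2 * \<eta>^2 * hb)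
      + (3 * \<eta> / 8 * hb + 3 * \<eta> / 8 * g + 3/2 * \<eta> * c * d)"
    using pos by (simp add: P_def \<kappa>_def field_simps power2_eq_square)
  ultimately show ?thesis by (smt (verit))
qed

subsection \<open>The zeroth-order primal-dual iteration\<close>

locale zo_primal_dual = connected_graph a
  for a :: "real^'n^'n" +
  fixes f :: "'n \<Rightarrow> real^'p \<Rightarrow> real" and g :: "'n \<Rightarrow> real^'p \<Rightarrow> real^'p"
    and Lf \<alpha> \<beta> \<eta> :: real
    and x v :: "nat \<Rightarrow> real^'p^'n" and \<delta> :: "nat \<Rightarrow> 'n \<Rightarrow> real"
  assumes gradient: "\<And>i y. GDERIV (f i) y :> g i y"
    and lipschitz: "\<And>i y z. norm (g i y - g i z) \<le> Lf * norm (y - z)"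
    and beta_pos: "0 < \<beta>" and beta_less_alpha: "\<beta> < \<alpha>" and eta_pos: "0 < \<eta>"
    and delta_pos: "\<And>j i. 0 < \<delta> j i"
    and dual_init: "(\<Sum>i\<in>UNIV. v 0 $ i) = 0"
    and primal_step: "\<And>j i. x (Suc j) $ i = x j $ i - \<eta> *\<^sub>R
      (\<alpha> *\<^sub>R (\<Sum>l\<in>UNIV. L$i$l *\<^sub>R x j $ l) + \<beta> *\<^sub>R v j $ i + grad_est (f i) (x j $ i) (\<delta> j i))"
    and dual_step: "\<And>j i. v (Suc j) $ i = v j $ i + (\<eta> * \<beta>) *\<^sub>R (\<Sum>l\<in>UNIV. L$i$l *\<^sub>R x j $ l)"
begin

definition average :: "nat \<Rightarrow> real^'p" where
  "average j = (1 / real CARD('n)) *\<^sub>R (\<Sum>i\<in>UNIV. x j $ i)"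

definition delta_max :: "nat \<Rightarrow> real" where
  "delta_max j = Max (range (\<delta> j))"

definition local_estimates :: "nat \<Rightarrow> real^'p^'n" where
  "local_estimates j = (\<chi> i. grad_est (f i) (x j $ i) (\<delta> j i))"

definition average_estimates :: "nat \<Rightarrow> real^'p^'n" where
  "average_estimates j = (\<chi> i. grad_est (f i) (average j) (delta_max j))"

definition objective :: "real^'p \<Rightarrow> real" where
  "objective y = (1 / real CARD('n)) * (\<Sum>i\<in>UNIV. f i y)"

definition objective_grad :: "real^'p \<Rightarrow> real^'p" where
  "objective_grad y = (1 / real CARD('n)) *\<^sub>R (\<Sum>i\<in>UNIV. g i y)"

definition estimate_error :: real where
  "estimate_error = 3 * real CARD('n) * real CARD('p) * Lf^2 / 4"

lemma delta_le_delta_max: "\<delta> j i \<le> delta_max j"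
  unfolding delta_max_def by (intro Max_ge) auto

lemma delta_max_pos: "0 < delta_max j"
  using delta_le_delta_max[of j] delta_pos[of j] by (meson less_le_trans)

lemma sum_laplacian_stacked: "(\<Sum>i\<in>UNIV. (L ** z) $ i) = (0::real^'p)"
proof -
  have "(\<Sum>i\<in>UNIV. (L ** z) $ i) = (\<Sum>j\<in>UNIV. (\<Sum>i\<in>UNIV. L$i$j) *\<^sub>R z$j)"
    by (simp add: matrix_mult_stacked_nth scaleR_sum_left) (rule sum.swap)
  then show ?thesis by (simp add: laplacian_column_sum[OF graph])
qed

lemma primal_step_stacked:
  "x (Suc j) = x j - \<eta> *\<^sub>R (\<alpha> *\<^sub>R (L ** x j) + \<beta> *\<^sub>R v j + local_estimates j)"
  by (simp add: vec_eq_iff primal_step matrix_mult_stacked_nth local_estimates_def)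

lemma dual_step_stacked: "v (Suc j) = v j + (\<eta> * \<beta>) *\<^sub>R (L ** x j)"
  by (simp add: vec_eq_iff dual_step matrix_mult_stacked_nth)

lemma dual_sum_zero: "(\<Sum>i\<in>UNIV. v j $ i) = 0"
proof (induction j)
  case 0
  then show ?case by (rule dual_init)
next
  case (Suc j)
  then show ?case
    using sum_laplacian_stacked[of "x j"]
    by (simp add: dual_step_stacked sum.distrib scaleR_sum_right[symmetric])
qed

lemma Kmat_mult_dual: "Kmat ** v j = v j"
  by (simp add: vec_eq_iff Kmat_mult_stacked_nth dual_sum_zero)

lemma Kmat_mult_primal_nth: "(Kmat ** x j) $ i = x j $ i - average j"
  by (simp add: Kmat_mult_stacked_nth average_def)

lemma norm_Kmat_mult_primal: "(norm (Kmat ** x j))^2 = (\<Sum>i\<in>UNIV. (norm (x j $ i - average j))^2)"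
  by (simp add: norm_sq_eq_sum_rows Kmat_mult_primal_nth)

definition mean_estimate :: "nat \<Rightarrow> real^'p" where
  "mean_estimate j = (1 / real CARD('n)) *\<^sub>R (\<Sum>i\<in>UNIV. local_estimates j $ i)"

lemma Hmat_mult_local_estimates_nth: "(Hmat ** local_estimates j) $ i = mean_estimate j"
  by (simp add: Hmat_mult_stacked_nth mean_estimate_def)

lemma average_Suc: "average (Suc j) = average j - \<eta> *\<^sub>R mean_estimate j"
proof -
  have "(\<Sum>i\<in>UNIV. x (Suc j) $ i) = (\<Sum>i\<in>UNIV. x j $ i) - \<eta> *\<^sub>R (\<Sum>i\<in>UNIV. local_estimates j $ i)"
    using sum_laplacian_stacked[of "x j"] dual_sum_zero[of j]
    by (simp add: primal_step_stacked sum_subtractf sum.distrib scaleR_sum_right[symmetric]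
        scaleR_right_distrib)
  then show ?thesis
    by (simp add: average_def mean_estimate_def scaleR_diff_right)
qed

lemma norm_Hmat_mult_local_estimates:
  "(norm (Hmat ** local_estimates j))^2 = real CARD('n) * (norm (mean_estimate j))^2"
  by (simp add: norm_sq_eq_sum_rows Hmat_mult_local_estimates_nth)

lemma grad_est_local_error:
  "(norm (local_estimates j $ i - g i (x j $ i)))^2 \<le> real CARD('p) * Lf^2 * (delta_max j)^2 / 4"
  unfolding local_estimates_def
  using grad_est_error[OF gradient[of i] lipschitz[of i] delta_pos[of j i]
      delta_le_delta_max[of j i]]
  by simp

lemma grad_est_average_error:
  "(norm (average_estimates j $ i - g i (average j)))^2
     \<le> real CARD('p) * Lf^2 * (delta_max j)^2 / 4"
  unfolding average_estimates_def
  using grad_est_error[OF gradient[of i] lipschitz[of i] delta_max_pos[of j] order_refl]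
  by simp

definition average_grad :: "nat \<Rightarrow> real^'p^'n" where
  "average_grad j = (\<chi> i. objective_grad (average j))"

lemma consensus_estimate_gap_le:
  "(norm (Kmat ** (local_estimates j - average_estimates j)))^2
     \<le> 3 * Lf^2 * (norm (Kmat ** x j))^2 + 2 * estimate_error * (delta_max j)^2"
proof -
  let ?P = "real CARD('p) * Lf^2 * (delta_max j)^2 / 4"
  have "(norm (local_estimates j $ i - average_estimates j $ i))^2
      \<le> 3 * (Lf^2 * (norm (x j $ i - average j))^2) + 6 * ?P" for i
  proof -
    have "(norm (local_estimates j $ i - average_estimates j $ i))^2
        \<le> 3 * ((norm (local_estimates j $ i - g i (x j $ i)))^2
          + (norm (g i (x j $ i) - g i (average j)))^2
          + (norm (g i (average j) - average_estimates j $ i))^2)"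
      using norm_add3_sq_le[of "local_estimates j $ i - g i (x j $ i)"
          "g i (x j $ i) - g i (average j)" "g i (average j) - average_estimates j $ i"]
      by simp
    then show ?thesis
      using grad_est_local_error[of j i] grad_est_average_error[of j i]
        lipschitz_sq[OF lipschitz[of i "x j $ i" "average j"]]
      by (simp add: norm_minus_commute)
  qed
  then have "(norm (local_estimates j - average_estimates j))^2
      \<le> (\<Sum>i\<in>UNIV. 3 * (Lf^2 * (norm (x j $ i - average j))^2) + 6 * ?P)"
    unfolding norm_sq_eq_sum_rows by (intro sum_mono) simp
  also have "\<dots> = 3 * Lf^2 * (norm (Kmat ** x j))^2 + 2 * estimate_error * (delta_max j)^2"
    by (simp add: norm_Kmat_mult_primal sum.distrib sum_distrib_left estimate_error_def
        algebra_simps)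
  finally show ?thesis
    using norm_Kmat_mult_le[of "local_estimates j - average_estimates j"] by linarith
qed

lemma average_estimates_increment_le:
  "(norm (average_estimates (Suc j) - average_estimates j))^2
     \<le> 3 * Lf^2 * \<eta>^2 * (norm (Hmat ** local_estimates j))^2
       + estimate_error * (delta_max (Suc j))^2 + estimate_error * (delta_max j)^2"
proof -
  let ?P = "\<lambda>j. real CARD('p) * Lf^2 * (delta_max j)^2 / 4"
  have "(norm (average_estimates (Suc j) $ i - average_estimates j $ i))^2
      \<le> 3 * ?P (Suc j) + 3 * (Lf^2 * (\<eta>^2 * (norm (mean_estimate j))^2)) + 3 * ?P j" for i
  proof -
    have "(norm (average_estimates (Suc j) $ i - average_estimates j $ i))^2
        \<le> 3 * ((norm (average_estimates (Suc j) $ i - g i (average (Suc j))))^2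
          + (norm (g i (average (Suc j)) - g i (average j)))^2
          + (norm (g i (average j) - average_estimates j $ i))^2)"
      using norm_add3_sq_le[of "average_estimates (Suc j) $ i - g i (average (Suc j))"
          "g i (average (Suc j)) - g i (average j)" "g i (average j) - average_estimates j $ i"]
      by simp
    moreover have "(norm (average (Suc j) - average j))^2 = \<eta>^2 * (norm (mean_estimate j))^2"
      using eta_pos by (simp add: average_Suc power_mult_distrib)
    ultimately show ?thesis
      using grad_est_average_error[of "Suc j" i] grad_est_average_error[of j i]
        lipschitz_sq[OF lipschitz[of i "average (Suc j)" "average j"]]
      by (simp add: norm_minus_commute)
  qed
  then have "(norm (average_estimates (Suc j) - average_estimates j))^2
      \<le> (\<Sum>i\<in>(UNIV::'n set).
          3 * ?P (Suc j) + 3 * (Lf^2 * (\<eta>^2 * (norm (mean_estimate j))^2)) + 3 * ?P j)"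
    unfolding norm_sq_eq_sum_rows by (intro sum_mono) simp
  also have "\<dots> = 3 * Lf^2 * \<eta>^2 * (norm (Hmat ** local_estimates j))^2
      + estimate_error * (delta_max (Suc j))^2 + estimate_error * (delta_max j)^2"
    unfolding norm_Hmat_mult_local_estimates estimate_error_def
    by (simp add: algebra_simps)
  finally show ?thesis .
qed

lemma average_grad_gap_le:
  "(norm (average_grad j - Hmat ** local_estimates j))^2
     \<le> 3 * Lf^2 * (norm (Kmat ** x j))^2 + estimate_error * (delta_max j)^2 / 2"
proof -
  define gv where "gv = (\<chi> i. g i (average j))"
  have "average_grad j - Hmat ** local_estimates j = Hmat ** (gv - local_estimates j)"
    by (simp add: vec_eq_iff Hmat_mult_stacked_nth average_grad_def objective_grad_def gv_def
        sum_subtractf scaleR_diff_right)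
  then have "(norm (average_grad j - Hmat ** local_estimates j))^2
      \<le> (\<Sum>i\<in>UNIV. (norm (local_estimates j $ i - g i (average j)))^2)"
    using norm_Hmat_mult_le[of "gv - local_estimates j"]
    by (simp add: norm_sq_eq_sum_rows gv_def norm_minus_commute)
  also have "\<dots> \<le> (\<Sum>i\<in>UNIV. 3 * (Lf^2 * (norm (x j $ i - average j))^2)
      + 3/2 * (real CARD('p) * Lf^2 * (delta_max j)^2 / 4))"
  proof (rule sum_mono)
    fix i
    show "(norm (local_estimates j $ i - g i (average j)))^2
        \<le> 3 * (Lf^2 * (norm (x j $ i - average j))^2)
          + 3/2 * (real CARD('p) * Lf^2 * (delta_max j)^2 / 4)"
      using norm_add_sq_le[of "g i (x j $ i) - g i (average j)"
          "local_estimates j $ i - g i (x j $ i)"]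
        lipschitz_sq[OF lipschitz[of i "x j $ i" "average j"]] grad_est_local_error[of j i]
      by simp
  qed
  also have "\<dots> = 3 * Lf^2 * (norm (Kmat ** x j))^2 + estimate_error * (delta_max j)^2 / 2"
    by (simp add: norm_Kmat_mult_primal sum.distrib sum_distrib_left estimate_error_def
        algebra_simps)
  finally show ?thesis .
qed

lemma objective_gradient: "GDERIV objective y :> objective_grad y"
proof -
  have "((\<lambda>y. \<Sum>i\<in>UNIV. f i y) has_derivative (\<lambda>h. \<Sum>i\<in>UNIV. inner h (g i y))) (at y)"
    using gradient unfolding gderiv_def by (intro has_derivative_sum) auto
  then have "(objective has_derivative
      (\<lambda>h. (1 / real CARD('n)) * (\<Sum>i\<in>UNIV. inner h (g i y)))) (at y)"
    unfolding objective_def by (rule has_derivative_mult_right)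
  then show ?thesis
    unfolding gderiv_def objective_grad_def by (simp add: inner_sum_right)
qed

lemma objective_grad_lipschitz: "norm (objective_grad y - objective_grad z) \<le> Lf * norm (y - z)"
proof -
  have "norm (objective_grad y - objective_grad z)
      = (1 / real CARD('n)) * norm (\<Sum>i\<in>UNIV. g i y - g i z)"
    by (simp add: objective_grad_def sum_subtractf scaleR_diff_right[symmetric])
  also have "\<dots> \<le> (1 / real CARD('n)) * (\<Sum>i\<in>(UNIV::'n set). Lf * norm (y - z))"
    by (intro mult_left_mono order_trans[OF norm_sum sum_mono] lipschitz) auto
  finally show ?thesis by simp
qed

lemma objective_descent:
  "real CARD('n) * (objective (average (Suc j)) - objective (average j))
     \<le> \<eta>/2 * (norm (average_grad j - Hmat ** local_estimates j))^2 - \<eta>/2 * (norm (average_grad j))^2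
       - \<eta>/2 * (norm (Hmat ** local_estimates j))^2
       + Lf/2 * \<eta>^2 * (norm (Hmat ** local_estimates j))^2"
proof -
  define m where "m = mean_estimate j"
  have step: "average (Suc j) - average j = - (\<eta> *\<^sub>R m)"
    by (simp add: average_Suc m_def)
  have rows: "(Hmat ** local_estimates j) $ i = m" for i
    by (simp add: m_def Hmat_mult_local_estimates_nth)
  have inner_rows: "inner (average_grad j) (Hmat ** local_estimates j)
      = real CARD('n) * inner (objective_grad (average j)) m"
    by (simp add: inner_vec_def average_grad_def rows)
  have norm_rows: "(norm (Hmat ** local_estimates j))^2 = real CARD('n) * (norm m)^2"
    by (simp add: m_def norm_Hmat_mult_local_estimates)
  have "objective (average (Suc j)) - objective (average j)
      \<le> - \<eta> * inner (objective_grad (average j)) m + Lf / 2 * \<eta>^2 * (norm m)^2"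
    using descent_lemma[OF objective_gradient objective_grad_lipschitz,
        of "average (Suc j)" "average j"] eta_pos
    by (simp add: step power_mult_distrib)
  then have "real CARD('n) * (objective (average (Suc j)) - objective (average j))
      \<le> real CARD('n) * (- \<eta> * inner (objective_grad (average j)) m + Lf / 2 * \<eta>^2 * (norm m)^2)"
    by (rule mult_left_mono) simp
  also have "\<dots> = - \<eta> * inner (average_grad j) (Hmat ** local_estimates j)
      + Lf / 2 * \<eta>^2 * (norm (Hmat ** local_estimates j))^2"
    unfolding inner_rows norm_rows by (simp add: algebra_simps)
  also have "inner (average_grad j) (Hmat ** local_estimates j)
      = 1/2 * ((norm (average_grad j))^2 + (norm (Hmat ** local_estimates j))^2
        - (norm (average_grad j - Hmat ** local_estimates j))^2)"
    by (simp add: power2_norm_eq_inner inner_diff_left inner_diff_right inner_commute)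
  finally show ?thesis by (simp add: algebra_simps)
qed

definition shifted_dual :: "nat \<Rightarrow> real^'p^'n" where
  "shifted_dual j = v j + (1/\<beta>) *\<^sub>R average_estimates j"

lemma consensus_potential_descent:
  "consensus_potential (pinv L) \<alpha> \<beta> (x (Suc j)) (shifted_dual (Suc j))
     - consensus_potential (pinv L) \<alpha> \<beta> (x j) (shifted_dual j)
   \<le> - \<eta> * (\<alpha> - \<beta> - \<eta> * \<beta>^2) * inner (x j) (L ** x j)
     + \<eta>^2 * (2 * \<alpha>^2 + \<beta>^2) * (norm (L ** x j))^2 + \<eta> * (norm (Kmat ** x j))^2
     + (\<eta> + 5/2 * \<eta>^2) * (norm (Kmat ** (local_estimates j - average_estimates j)))^2
     - \<eta> * (\<beta> - 1/2 - (1 / rho2 L + \<alpha> / \<beta>) / (2*\<beta>) - \<eta> * (2 * \<beta>^2 + 1/2))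
       * (norm (Kmat ** shifted_dual j))^2
     + ((1 / \<beta>^2 + 1 / (2*\<eta>*\<beta>)) * (1 / rho2 L + \<alpha> / \<beta>) + 1 / (2*\<eta>*\<beta>^2) + 1 / \<beta>^2 + 1/2)
       * (norm (average_estimates (Suc j) - average_estimates j))^2"
  using consensus_potential_step_le[OF beta_pos beta_less_alpha eta_pos Kmat_mult_dual[of j],
      where X = "x j" and hh = "local_estimates j" and hz = "average_estimates j"
      and hp = "average_estimates (Suc j)"]
  unfolding primal_step_stacked shifted_dual_def dual_step_stacked by simp

theorem lyapunov_step:
  defines "P \<equiv> (1 / \<beta>^2 + 1 / (2*\<eta>*\<beta>)) * (1 / rho2 L + \<alpha> / \<beta>) + 1 / (2*\<eta>*\<beta>^2) + 1 / \<beta>^2 + 1/2"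
  shows "consensus_potential (pinv L) \<alpha> \<beta> (x (Suc j)) (shifted_dual (Suc j))
      - consensus_potential (pinv L) \<alpha> \<beta> (x j) (shifted_dual j)
      + real CARD('n) * (objective (average (Suc j)) - objective (average j))
    \<le> - \<eta> * (((\<alpha> - \<beta>) * rho2 L - 1/2 * (2 + 9 * Lf^2))
          - \<eta> * (\<beta>^2 * rho L + (2 * \<alpha>^2 + \<beta>^2) * (rho L)^2 + 15/2 * Lf^2))
        * (norm (Kmat ** x j))^2
      - \<eta> * ((\<beta> - 1/2 - \<alpha> / (2 * \<beta>^2) - 1 / (2 * \<beta> * rho2 L)) - \<eta> * (2 * \<beta>^2 + 1/2))
        * (norm (Kmat ** shifted_dual j))^2
      - \<eta> * ((1/8 - 3 / (2 * \<beta>) * (1 / \<beta> + 1 / rho2 L + \<alpha> / \<beta>) * Lf^2)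
          - \<eta> * (3 / \<beta>^2 * (1 + 1 / rho2 L + \<alpha> / \<beta>) * Lf^2 + Lf * (1 + 3 * Lf) / 2))
        * (norm (Hmat ** local_estimates j))^2
      - \<eta> / 8 * (norm (average_grad j))^2
      + ((15 * \<eta> / 4 + 5 * \<eta>^2) * estimate_error + P * estimate_error) * (delta_max j)^2
      + P * estimate_error * (delta_max (Suc j))^2"
proof -
  have "0 \<le> estimate_error"
    by (simp add: estimate_error_def)
  then show ?thesis
    unfolding P_def
    by (rule lyapunov_step_arith[OF eta_pos beta_pos beta_less_alpha rho2_pos _
        zero_le_power2 zero_le_power2 zero_le_power2
        consensus_potential_descent objective_descent consensus_estimate_gap_le
        average_estimates_increment_le average_grad_gap_le
        rho2_le_laplacian_quadratic_form_stacked laplacian_quadratic_form_le_rho_stacked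
        norm_laplacian_le_rho_stacked])
qed

end

theorem lemma7:
  fixes a :: "real^'n^'n"
    and f :: "'n \<Rightarrow> real^'p \<Rightarrow> real"
    and g :: "'n \<Rightarrow> real^'p \<Rightarrow> real^'p"
    and Lf \<alpha> \<beta> \<eta> :: real
    and x v :: "nat \<Rightarrow> real^'p^'n"
    and \<delta> :: "nat \<Rightarrow> 'n \<Rightarrow> real"
    and k :: nat
  assumes def_n: "n = real CARD('n)"
      and def_p: "p = real CARD('p)"
      and def_L: "L = laplacian a"
      and def_F: "F = (\<lambda>y. (1 / n) * (\<Sum>i\<in>UNIV. f i y))"
      and def_gradF: "gradF = (\<lambda>y. (1 / n) *\<^sub>R (\<Sum>i\<in>UNIV. g i y))"
      and def_fstar: "fstar = (INF y. F y)"
      and def_K: "K = (Kmat :: real^'n^'n)"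
      and def_H: "H = (Hmat :: real^'n^'n)"
      and def_Q: "Q = pinv (laplacian a)"
      and def_xbar: "xbar = (\<lambda>j. (1 / n) *\<^sub>R (\<Sum>i\<in>UNIV. x j $ i))"
      and "\<delta>max = (\<lambda>j. Max (range (\<delta> j)))"
      and def_hk: "hk = (\<lambda>j. (\<chi> i. grad_est (f i) (x j $ i) (\<delta> j i)) :: real^'p^'n)"
      and def_hbar: "hbar = (\<lambda>j. kron_act H (hk j))"
      and def_h0: "h0 = (\<lambda>j. (\<chi> i. grad_est (f i) (xbar j) (\<delta>max j)) :: real^'p^'n)"
      and def_g0bar: "g0bar = (\<lambda>j. (\<chi> i. gradF (xbar j)) :: real^'p^'n)"
      and def_w: "w = (\<lambda>j. v j + (1 / \<beta>) *\<^sub>R h0 j)"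
      and def_U: "U = (\<lambda>j. (1/2) * wnorm2 K (x j) + (1/2) * wnorm2 (Q + (\<alpha> / \<beta>) *\<^sub>R K) (w j)
                     + inner (x j) (kron_act K (w j)) + n * (F (xbar j) - fstar))"
      and def_eps1: "eps1 = (\<alpha> - \<beta>) * rho2 L - (1/2) * (2 + 9 * Lf\<^sup>2)"
      and def_eps2: "eps2 = \<beta>\<^sup>2 * rho L + (2 * \<alpha>\<^sup>2 + \<beta>\<^sup>2) * (rho L)\<^sup>2 + (15/2) * Lf\<^sup>2"
      and def_eps3: "eps3 = \<beta> - 1/2 - \<alpha> / (2 * \<beta>\<^sup>2) - 1 / (2 * \<beta> * rho2 L)"
      and def_eps4: "eps4 = 2 * \<beta>\<^sup>2 + 1/2"
      and def_eps5: "eps5 = 1/8 - 3 / (2 * \<beta>) * (1 / \<beta> + 1 / rho2 L + \<alpha> / \<beta>) * Lf\<^sup>2"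
      and def_eps6: "eps6 = 3 / \<beta>\<^sup>2 * (1 + 1 / rho2 L + \<alpha> / \<beta>) * Lf\<^sup>2 + Lf * (1 + 3 * Lf) / 2"
      and def_eps12: "eps12 = ((1 / \<beta>\<^sup>2 + 1 / (2 * \<eta> * \<beta>)) * (1 / rho2 L + \<alpha> / \<beta>)
                    + 1 / (2 * \<eta> * \<beta>\<^sup>2) + 1 / \<beta>\<^sup>2 + 1/2) * (3 * n * p * Lf\<^sup>2 / 4)"
      and def_eps11: "eps11 = (15 * \<eta> / 4 + 5 * \<eta>\<^sup>2) * (3 * n * p * Lf\<^sup>2 / 4) + eps12"
      and n2: "CARD('n) \<ge> 2"
      and graph: "weighted_undirected_graph a"
      and A1: "graph_connected a"
      and A2: "\<exists>xs. \<forall>y. F xs \<le> F y"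
      and A3_grad: "\<And>i y. GDERIV (f i) y :> g i y"
      and A3_lip: "\<And>i y z. norm (g i y - g i z) \<le> Lf * norm (y - z)"
      and params: "\<alpha> > \<beta>" "\<beta> > 0" "\<eta> > 0"
      and delta_pos: "\<And>j i. \<delta> j i > 0"
      and v0: "(\<Sum>i\<in>UNIV. v 0 $ i) = 0"
      and x_step: "\<And>j i. x (Suc j) $ i = x j $ i - \<eta> *\<^sub>R
                   (\<alpha> *\<^sub>R (\<Sum>l\<in>UNIV. L$i$l *\<^sub>R x j $ l) + \<beta> *\<^sub>R v j $ i
                    + grad_est (f i) (x j $ i) (\<delta> j i))"
      and v_step: "\<And>j i. v (Suc j) $ i = v j $ i + (\<eta> * \<beta>) *\<^sub>R (\<Sum>l\<in>UNIV. L$i$l *\<^sub>R x j $ l)"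
  shows "U (Suc k) \<le> U k - \<eta> * (eps1 - \<eta> * eps2) * wnorm2 K (x k)
           - \<eta> * (eps3 - \<eta> * eps4) * wnorm2 K (w k)
           - \<eta> * (eps5 - \<eta> * eps6) * (norm (hbar k))\<^sup>2
           - \<eta> / 8 * (norm (g0bar k))\<^sup>2
           + eps11 * (\<delta>max k)\<^sup>2 + eps12 * (\<delta>max (Suc k))\<^sup>2"
proof -
  \<comment> \<open>\<open>fstar\<close> cancels in \<open>U (Suc k) - U k\<close>, so neither A2 nor its value is needed.\<close>
  interpret zo_primal_dual a f g Lf \<alpha> \<beta> \<eta> x v \<delta>
    using graph A1 n2 A3_grad A3_lip params delta_pos v0 x_step v_step
    by (simp add: zo_primal_dual_def zo_primal_dual_axioms_def connected_graph_def def_L)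
  have defs: "\<delta>max = delta_max" "xbar = average" "hk = local_estimates" "h0 = average_estimates"
    "hbar = (\<lambda>j. Hmat ** local_estimates j)" "g0bar = average_grad" "w = shifted_dual"
    "F = objective"
    using \<open>\<delta>max = (\<lambda>j. Max (range (\<delta> j)))\<close> def_xbar def_hk def_h0 def_hbar def_H def_g0bar
      def_gradF def_w def_F
    by (simp_all add: fun_eq_iff def_n delta_max_def average_def local_estimates_def
        average_estimates_def kron_act_eq_matrix_mult average_grad_def objective_grad_def
        shifted_dual_def objective_def)
  have "U (Suc k) - U k
      = consensus_potential (pinv L) \<alpha> \<beta> (x (Suc k)) (shifted_dual (Suc k))
        - consensus_potential (pinv L) \<alpha> \<beta> (x k) (shifted_dual k)
        + real CARD('n) * (objective (average (Suc k)) - objective (average k))"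
    using defs
    by (simp add: def_U def_K def_Q def_L def_n wnorm2_def kron_act_eq_matrix_mult
        consensus_potential_def algebra_simps)
  then show ?thesis
    using lyapunov_step[of k]
    unfolding defs def_K wnorm2_Kmat def_n def_p def_L def_eps1 def_eps2 def_eps3 def_eps4
      def_eps5 def_eps6 def_eps11 def_eps12 estimate_error_def
    by linarith
qed

end
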